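(* Let $x_1,\ldots,x_n,y_1,\ldots,y_p$ be self-adjoint elements of a unital C$^*$-algebra $\mathcal A$ such that $y_1,\ldots,y_p$ belong to the C$^*$-subalgebra of $\mathcal A$ generated by $x_1,\ldots,x_n$. Then for every $\omega>0$, $$\mathfrak K_{top}^{(2)}(x_1,\ldots,x_n;4\omega)\le\mathfrak K_{top}^{(2)}(x_1,\ldots,x_n:y_1,\ldots,y_p;2\omega)\le\mathfrak K_{top}^{(2)}(x_1,\ldots,x_n;\omega).$$
   Context: Microstates. Let $\mathcal A$ be a unital C$^*$-algebra and $x_1,\dots,x_n,y_1,\dots,y_m$ self-adjoint elements of $\mathcal A$. Let $\{P_r\}_{r\ge1}$ enumerate all noncommutative polynomials in the indeterminates $X_1,\dots,X_n,Y_1,\dots,Y_m$ whose coefficients have rational real and imaginary parts (constants allowed). $\mathcal M_k^{s.a.}(\mathbb C)$ is the set of self-adjoint $k\times k$ complex matrices and $\tau_k=\frac1k\mathrm{Tr}$. For $R,\epsilon>0$ and $r,k\in\mathbb N$, $\Gamma_R^{(top)}(x_1,\dots,x_n:y_1,\dots,y_m;k,\epsilon,P_1,\dots,P_r)$ is the set of $(A_1,\dots,A_n)\in\mathcal M_k^{s.a.}(\mathbb C)^n$ for which there exist $B_1,\dots,B_m\in\mathcal M_k^{s.a.}(\mathbb C)$ with $\max_{i,j}\{\|A_i\|,\|B_j\|\}\le R$ and $\big|\|P_j(A_1,\dots,A_n,B_1,\dots,B_m)\|-\|P_j(x_1,\dots,x_n,y_1,\dots,y_m)\|\big|\le\epsilon$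 for $1\le j\le r$. When $m=0$ it is written $\Gamma_R^{(top)}(x_1,\dots,x_n;k,\epsilon,P_1,\dots,P_r)$. Covering numbers. On $\mathcal M_k(\mathbb C)^n$ put $\|(A_i)\|_2=(\sum_i\tau_k(A_i^*A_i))^{1/2}$. The $\omega$-orbit ball centred at $(B_i)$ is the set of $(A_i)$ such that some unitary $W\in\mathcal M_k(\mathbb C)$ satisfies $\|(A_i)-(WB_iW^* )\|_2<\omega$; for $\Sigma\subseteq\mathcal M_k(\mathbb C)^n$, $o_2(\Sigma,\omega)$ is the minimal number of $\omega$-orbit balls centred at points of $\Sigma$ covering $\Sigma$. Convention $\log 0=-\infty$. Topological orbit dimension: $\mathfrak K^{(2)}_{top}(x:y;\omega)=\sup_{R>0}\inf_{\epsilon>0,r\in\mathbb N}\limsup_{k\to\infty}\frac{\log o_2(\Gamma_R^{(top)}(x:y;k,\epsilon,P_1,\dots,P_r),\omega)}{k^2}$; when $m=0$ the "$:y$" part is omitted. *)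

theory Defs
  imports "HOL-Analysis.Analysis" "HOL-Library.Poly_Mapping" "HOL-Library.Liminf_Limsup"
          "Jordan_Normal_Form.Matrix"
begin

class cstar_algebra = real_normed_algebra_1 + banach +
  fixes scaleC :: "complex \<Rightarrow> 'a \<Rightarrow> 'a"
    and adj :: "'a \<Rightarrow> 'a"
  assumes scaleC_add_right: "scaleC c (a + b) = scaleC c a + scaleC c b"
    and scaleC_add_left: "scaleC (c + d) a = scaleC c a + scaleC d a"
    and scaleC_scaleC: "scaleC c (scaleC d a) = scaleC (c * d) a"
    and scaleC_of_real: "scaleC (complex_of_real r) a = scaleR r a"
    and scaleC_mult_left: "scaleC c (a * b) = scaleC c a * b"
    and scaleC_mult_right: "scaleC c (a * b) = a * scaleC c b"
    and norm_scaleC: "norm (scaleC c a) = cmod c * norm a"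
    and adj_adj: "adj (adj a) = a"
    and adj_add: "adj (a + b) = adj a + adj b"
    and adj_scaleC: "adj (scaleC c a) = scaleC (cnj c) (adj a)"
    and adj_mult: "adj (a * b) = adj b * adj a"
    and cstar_identity: "norm (adj a * a) = (norm a)\<^sup>2"

definition cstar_subalgebra :: "'a::cstar_algebra set \<Rightarrow> bool" where
  "cstar_subalgebra B \<longleftrightarrow> closed B \<and> 1 \<in> B \<and>
     (\<forall>a\<in>B. \<forall>b\<in>B. a + b \<in> B \<and> a * b \<in> B) \<and>
     (\<forall>c. \<forall>a\<in>B. scaleC c a \<in> B) \<and> (\<forall>a\<in>B. adj a \<in> B)"

definition cstar_generated :: "'a::cstar_algebra set \<Rightarrow> 'a set" where
  "cstar_generated S = \<Inter> {B. cstar_subalgebra B \<and> S \<subseteq> B}"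

text \<open>A noncommutative polynomial in the variables 0,1,2,... is a finitely supported
  map from words (lists of variable indices) to complex coefficients.
  Variables X_1..X_n are 0..n-1, Y_1..Y_m are n..n+m-1.\<close>

type_synonym ncpoly = "nat list \<Rightarrow>\<^sub>0 complex"

definition rat_ncpolys :: "nat \<Rightarrow> ncpoly set" where
  "rat_ncpolys N = {p. \<forall>w\<in>Poly_Mapping.keys p. set w \<subseteq> {..<N} \<and>
      Re (Poly_Mapping.lookup p w) \<in> \<rat> \<and> Im (Poly_Mapping.lookup p w) \<in> \<rat>}"

definition eval_alg :: "ncpoly \<Rightarrow> 'a::cstar_algebra list \<Rightarrow> 'a" where
  "eval_alg p xs = (\<Sum>w\<in>Poly_Mapping.keys p. scaleC (Poly_Mapping.lookup p w) (foldr (\<lambda>i acc. xs ! i * acc) w 1))"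

definition madj :: "complex mat \<Rightarrow> complex mat" where
  "madj A = transpose_mat (map_mat cnj A)"

definition mtrace :: "complex mat \<Rightarrow> complex" where
  "mtrace A = (\<Sum>i<dim_row A. A $$ (i, i))"

definition vnorm :: "complex vec \<Rightarrow> real" where
  "vnorm v = sqrt (\<Sum>i<dim_vec v. (cmod (v $ i))\<^sup>2)"

definition opnorm :: "nat \<Rightarrow> complex mat \<Rightarrow> real" where
  "opnorm k A = Sup {vnorm (A *\<^sub>v v) | v. v \<in> carrier_vec k \<and> vnorm v \<le> 1}"

definition sa_mats :: "nat \<Rightarrow> complex mat set" where
  "sa_mats k = {A. A \<in> carrier_mat k k \<and> madj A = A}"

definition unitary_mats :: "nat \<Rightarrow> complex mat set" where
  "unitary_mats k = {W. W \<in> carrier_mat k k \<and> W * madj W = 1\<^sub>m k \<and> madj W * W = 1\<^sub>m k}"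

definition eval_mat :: "nat \<Rightarrow> ncpoly \<Rightarrow> complex mat list \<Rightarrow> complex mat" where
  "eval_mat k p As = mat k k (\<lambda>(i, j). \<Sum>w\<in>Poly_Mapping.keys p.
      Poly_Mapping.lookup p w * (foldr (\<lambda>l acc. As ! l * acc) w (1\<^sub>m k)) $$ (i, j))"

definition tau :: "nat \<Rightarrow> complex mat \<Rightarrow> complex" where
  "tau k A = mtrace A / of_nat k"

definition norm2 :: "nat \<Rightarrow> complex mat list \<Rightarrow> real" where
  "norm2 k As = sqrt (\<Sum>i<length As. Re (tau k (madj (As ! i) * As ! i)))"

definition tuple_diff :: "complex mat list \<Rightarrow> complex mat list \<Rightarrow> complex mat list" where
  "tuple_diff As Bs = map2 (\<lambda>A B. A - B) As Bs"

text \<open>Gamma_R^{top}(x : y; k, eps, P_1, ..., P_r), with the enumeration P indexed from 0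
  (P 0 = P_1, ..., P (r-1) = P_r).\<close>
definition Gamma_top :: "'a::cstar_algebra list \<Rightarrow> 'a list \<Rightarrow> (nat \<Rightarrow> ncpoly) \<Rightarrow> real \<Rightarrow>
    nat \<Rightarrow> real \<Rightarrow> nat \<Rightarrow> complex mat list set" where
  "Gamma_top xs ys P R k \<epsilon> r =
    {As. length As = length xs \<and> (\<forall>A\<in>set As. A \<in> sa_mats k) \<and>
      (\<exists>Bs. length Bs = length ys \<and> (\<forall>B\<in>set Bs. B \<in> sa_mats k) \<and>
        (\<forall>C\<in>set (As @ Bs). opnorm k C \<le> R) \<and>
        (\<forall>j<r. \<bar>opnorm k (eval_mat k (P j) (As @ Bs)) - norm (eval_alg (P j) (xs @ ys))\<bar> \<le> \<epsilon>))}"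

definition orbit_ball :: "nat \<Rightarrow> complex mat list \<Rightarrow> real \<Rightarrow> complex mat list set" where
  "orbit_ball k Bs \<omega> = {As. length As = length Bs \<and> (\<forall>A\<in>set As. A \<in> carrier_mat k k) \<and>
      (\<exists>W\<in>unitary_mats k. norm2 k (tuple_diff As (map (\<lambda>B. W * B * madj W) Bs)) < \<omega>)}"

text \<open>o_2(Sigma, omega): minimal number of omega-orbit balls centred in Sigma covering Sigma
  (infinity if there is no finite such cover).\<close>
definition o2 :: "nat \<Rightarrow> complex mat list set \<Rightarrow> real \<Rightarrow> enat" where
  "o2 k \<Sigma> \<omega> = Inf {enat (card C) | C. finite C \<and> C \<subseteq> \<Sigma> \<and> \<Sigma> \<subseteq> (\<Union>B\<in>C. orbit_ball k B \<omega>)}"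

text \<open>Logarithm of a covering number, with log 0 = -infinity (natural logarithm).\<close>
definition log_cov :: "enat \<Rightarrow> ereal" where
  "log_cov N = (if N = \<infinity> then \<infinity> else if N = 0 then -\<infinity> else ereal (ln (real (the_enat N))))"

text \<open>K_top^(2)(x : y; omega) w.r.t. the enumeration P; for m = 0 take ys = [].\<close>
definition Ktop :: "'a::cstar_algebra list \<Rightarrow> 'a list \<Rightarrow> (nat \<Rightarrow> ncpoly) \<Rightarrow> real \<Rightarrow> ereal" where
  "Ktop xs ys P \<omega> =
    (SUP R\<in>{0<..}. INF \<epsilon>\<in>{0<..}. INF r\<in>{1..}.
       limsup (\<lambda>k. log_cov (o2 k (Gamma_top xs ys P R k \<epsilon> r) \<omega>) / ereal ((real k)\<^sup>2)))"

end

theory Submission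
  imports Defs
begin

text \<open>
  Both inequalities between orbit dimensions are instances of one comparison principle
  (\<open>Ktop_le_if_dominated\<close>): if every microstate space of the second kind contains a microstate
  space of the first kind (quantifiers ordered as in the definition of the orbit dimension), then
  the first orbit dimension at radius \<open>2\<omega>\<close> is at most the second one at radius \<open>\<omega>\<close>.  This rests on
  the fact that covering a subset by orbit balls centred in the subset costs at most as many
  balls of twice the radius as covering the whole set (\<open>o2_mono\<close>).

  The inclusion \<open>\<Gamma>(x : y) \<subseteq> \<Gamma>(x)\<close> is obtained by forgetting the extra matrices, since every test
  polynomial in \<open>x\<close> is a test polynomial in \<open>x, y\<close>.  For \<open>\<Gamma>(x) \<subseteq> \<Gamma>(x : y)\<close> one approximates
  each \<open>y\<^sub>l\<close> by a rational polynomial \<open>p\<^sub>l(x)\<close> whose matricial values are self-adjoint, and extends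
  a microstate \<open>A\<close> by \<open>p\<^sub>l(A)\<close>: a test polynomial \<open>Q(X, Y)\<close> evaluated at \<open>(A, p(A))\<close> is the test
  polynomial \<open>Q(X, p(X))\<close> evaluated at \<open>A\<close>, whose norm is controlled by the microstate conditions.
\<close>

text \<open>Both evaluation maps (in a C*-algebra and on matrices) are sums of a term over the
  monomials of a polynomial; their additivity and multiplicativity are proved once for such sums.\<close>

definition coeff_sum :: "(complex \<Rightarrow> nat list \<Rightarrow> 'b::comm_monoid_add) \<Rightarrow> ncpoly \<Rightarrow> 'b" where
  "coeff_sum g p = (\<Sum>w\<in>Poly_Mapping.keys p. g (Poly_Mapping.lookup p w) w)"

lemma coeff_sum_superset:
  assumes "finite S" "Poly_Mapping.keys p \<subseteq> S" "\<And>w. g 0 w = 0"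
  shows "coeff_sum g p = (\<Sum>w\<in>S. g (Poly_Mapping.lookup p w) w)"
  unfolding coeff_sum_def
  by (rule sum.mono_neutral_left) (use assms in \<open>auto simp: in_keys_iff\<close>)

lemma coeff_sum_add:
  assumes "\<And>w. g 0 w = 0" "\<And>a b w. g (a + b) w = g a w + g b w"
  shows "coeff_sum g (p + q) = coeff_sum g p + coeff_sum g q"
proof -
  let ?S = "Poly_Mapping.keys p \<union> Poly_Mapping.keys q"
  have "coeff_sum g (p + q) = (\<Sum>w\<in>?S. g (Poly_Mapping.lookup (p+q) w) w)"
    by (rule coeff_sum_superset) (use assms keys_add[of p q] in auto)
  also have "\<dots> = (\<Sum>w\<in>?S. g (Poly_Mapping.lookup p w) w) + (\<Sum>w\<in>?S. g (Poly_Mapping.lookup q w) w)"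
    by (simp add: lookup_add assms sum.distrib)
  also have "\<dots> = coeff_sum g p + coeff_sum g q"
    by (subst (1 2) coeff_sum_superset[where S = ?S]) (use assms in auto)
  finally show ?thesis .
qed

lemma coeff_sum_zero: "coeff_sum g 0 = 0"
  by (simp add: coeff_sum_def)

lemma coeff_sum_sum:
  assumes "\<And>w. g 0 w = 0" "\<And>a b w. g (a + b) w = g a w + g b w"
  shows "coeff_sum g (sum f I) = (\<Sum>i\<in>I. coeff_sum g (f i))"
proof (cases "finite I")
  case True
  then show ?thesis by induction (simp_all add: coeff_sum_zero coeff_sum_add[OF assms])
qed (simp add: coeff_sum_zero)

lemma coeff_sum_single:
  assumes "\<And>w. g 0 w = 0"
  shows "coeff_sum g (Poly_Mapping.single w c) = g c w"
  using assms by (simp add: coeff_sum_def)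

definition ncp_mult :: "ncpoly \<Rightarrow> ncpoly \<Rightarrow> ncpoly" where
  "ncp_mult p q = (\<Sum>(u,v)\<in>Poly_Mapping.keys p \<times> Poly_Mapping.keys q.
      Poly_Mapping.single (u @ v) (Poly_Mapping.lookup p u * Poly_Mapping.lookup q v))"

lemma coeff_sum_ncp_mult:
  assumes "\<And>w. g 0 w = 0" "\<And>a b w. g (a + b) w = g a w + g b w"
  shows "coeff_sum g (ncp_mult p q) = (\<Sum>u\<in>Poly_Mapping.keys p. \<Sum>v\<in>Poly_Mapping.keys q.
      g (Poly_Mapping.lookup p u * Poly_Mapping.lookup q v) (u @ v))"
  unfolding ncp_mult_def
  by (simp add: coeff_sum_sum[OF assms] coeff_sum_single[of g, OF assms(1)] sum.cartesian_product case_prod_beta)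

lemma coeff_sum_ncp_mult_const:
  assumes "\<And>w. g 0 w = 0" "\<And>a b w. g (a + b) w = g a w + g b w"
  shows "coeff_sum g (ncp_mult (Poly_Mapping.single [] c) p) = (\<Sum>v\<in>Poly_Mapping.keys p. g (c * Poly_Mapping.lookup p v) v)"
  by (cases "c = 0") (simp_all add: coeff_sum_ncp_mult[OF assms] assms(1))

lemma scaleC_zero_left[simp]: "scaleC 0 (a::'a::cstar_algebra) = 0"
  using scaleC_add_left[of 0 0 a] by simp

lemma scaleC_zero_right[simp]: "scaleC c (0::'a::cstar_algebra) = 0"
  using scaleC_add_right[of c 0 0] by simp

lemma scaleC_one[simp]: "scaleC 1 (a::'a::cstar_algebra) = a"
  using scaleC_of_real[of 1 a] by simp

lemma scaleC_sum_right: "scaleC c (sum f I) = (\<Sum>i\<in>I. scaleC c (f i::'a::cstar_algebra))"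
  by (induction I rule: infinite_finite_induct) (simp_all add: scaleC_add_right)

lemma scaleC_minus_right: "scaleC c (a - b) = scaleC c a - scaleC c (b::'a::cstar_algebra)"
  using scaleC_add_right[of c "a - b" b] by (simp add: algebra_simps)

lemma scaleC_minus_left: "scaleC (c - d) a = scaleC c a - scaleC d (a::'a::cstar_algebra)"
  using scaleC_add_left[of "c - d" d a] by (simp add: algebra_simps)

lemma adj_zero[simp]: "adj (0::'a::cstar_algebra) = 0"
  using adj_add[of 0 0] by simp

lemma adj_minus: "adj (a - b) = adj a - adj (b::'a::cstar_algebra)"
  using adj_add[of "a - b" b] by (simp add: algebra_simps)

lemma adj_one[simp]: "adj (1::'a::cstar_algebra) = 1"
proof -
  have "adj (1::'a) = adj 1 * 1" by simp
  also have "\<dots> = adj 1 * adj (adj 1)" by (simp only: adj_adj)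
  also have "\<dots> = adj (adj 1 * 1)" by (simp only: adj_mult)
  also have "\<dots> = 1" by (simp only: mult_1_right adj_adj)
  finally show ?thesis .
qed

lemma adj_sum: "adj (sum f I) = (\<Sum>i\<in>I. adj (f i::'a::cstar_algebra))"
  by (induction I rule: infinite_finite_induct) (simp_all add: adj_add)

lemma norm_adj_le: "norm (a::'a::cstar_algebra) \<le> norm (adj a)"
proof (cases "a = 0")
  case False
  have "(norm a)\<^sup>2 = norm (adj a * a)" by (simp add: cstar_identity)
  also have "\<dots> \<le> norm (adj a) * norm a" by (rule norm_mult_ineq)
  finally have "norm a * norm a \<le> norm (adj a) * norm a" by (simp add: power2_eq_square)
  then show ?thesis using False by simp
qed simp

lemma norm_adj[simp]: "norm (adj (a::'a::cstar_algebra)) = norm a"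
  using norm_adj_le[of a] norm_adj_le[of "adj a"] by (simp add: adj_adj)

lemma adj_scaleR: "adj (scaleR r (a::'a::cstar_algebra)) = scaleR r (adj a)"
  by (metis adj_scaleC complex_cnj_complex_of_real scaleC_of_real)

lemma bounded_linear_adj: "bounded_linear (adj :: 'a::cstar_algebra \<Rightarrow> 'a)"
  by (rule bounded_linear_intro[where K=1]) (simp_all add: adj_add adj_scaleR)

lemma scaleC_scaleR_comm: "scaleC c (scaleR r (a::'a::cstar_algebra)) = scaleR r (scaleC c a)"
  by (metis mult.commute scaleC_of_real scaleC_scaleC)

lemma bounded_linear_scaleC: "bounded_linear (scaleC c :: 'a::cstar_algebra \<Rightarrow> 'a)"
  by (rule bounded_linear_intro[where K="cmod c"]) (simp_all add: scaleC_add_right scaleC_scaleR_comm norm_scaleC mult.commute)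

definition alg_word :: "'a::cstar_algebra list \<Rightarrow> nat list \<Rightarrow> 'a" where
  "alg_word xs w = foldr (\<lambda>i acc. xs ! i * acc) w 1"

definition alg_term :: "'a::cstar_algebra list \<Rightarrow> complex \<Rightarrow> nat list \<Rightarrow> 'a" where
  "alg_term xs c w = scaleC c (alg_word xs w)"

lemma alg_term_zero: "alg_term xs 0 w = 0" by (simp add: alg_term_def)
lemma alg_term_add: "alg_term xs (a + b) w = alg_term xs a w + alg_term xs b w" by (simp add: alg_term_def scaleC_add_left)

lemma eval_alg_coeff_sum: "eval_alg p xs = coeff_sum (alg_term xs) p"
  by (simp add: eval_alg_def coeff_sum_def alg_term_def alg_word_def)

lemma alg_word_Nil[simp]: "alg_word xs [] = 1" by (simp add: alg_word_def)
lemma alg_word_Cons[simp]: "alg_word xs (i # w) = xs ! i * alg_word xs w" by (simp add: alg_word_def)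

lemma alg_word_append: "alg_word xs (u @ v) = alg_word xs u * alg_word xs v"
  by (induction u) (simp_all add: mult.assoc)

lemma alg_term_mult: "alg_term xs (a * b) (u @ v) = alg_term xs a u * alg_term xs b v"
proof -
  have "scaleC (a * b) (alg_word xs u * alg_word xs v) = scaleC a (scaleC b (alg_word xs u * alg_word xs v))"
    by (simp add: scaleC_scaleC)
  also have "\<dots> = scaleC a (alg_word xs u * scaleC b (alg_word xs v))"
    by (simp only: scaleC_mult_right)
  also have "\<dots> = scaleC a (alg_word xs u) * scaleC b (alg_word xs v)"
    by (simp only: scaleC_mult_left)
  finally show ?thesis by (simp add: alg_term_def alg_word_append)
qed

lemma eval_alg_add: "eval_alg (p + q) xs = eval_alg p xs + eval_alg q xs"
  by (simp add: eval_alg_coeff_sum coeff_sum_add alg_term_zero alg_term_add)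

lemma eval_alg_sum: "eval_alg (sum f I) xs = (\<Sum>i\<in>I. eval_alg (f i) xs)"
  by (simp add: eval_alg_coeff_sum coeff_sum_sum alg_term_zero alg_term_add)

lemma eval_alg_single: "eval_alg (Poly_Mapping.single w c) xs = scaleC c (alg_word xs w)"
  by (simp add: eval_alg_coeff_sum coeff_sum_single alg_term_zero) (simp add: alg_term_def)

lemma eval_alg_ncp_mult: "eval_alg (ncp_mult p q) xs = eval_alg p xs * eval_alg q xs"
  unfolding eval_alg_coeff_sum coeff_sum_ncp_mult[of "alg_term xs", OF alg_term_zero alg_term_add]
  by (simp add: alg_term_mult coeff_sum_def sum_product)

lemma eval_alg_ncp_mult_const: "eval_alg (ncp_mult (Poly_Mapping.single [] c) p) xs = scaleC c (eval_alg p xs)"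
  unfolding eval_alg_coeff_sum coeff_sum_ncp_mult_const[of "alg_term xs", OF alg_term_zero alg_term_add]
  by (simp add: coeff_sum_def scaleC_sum_right alg_term_def scaleC_scaleC)

definition rat_complex :: "complex \<Rightarrow> bool" where "rat_complex z \<longleftrightarrow> Re z \<in> \<rat> \<and> Im z \<in> \<rat>"

lemma rat_complex_0[simp]: "rat_complex 0" and rat_complex_1[simp]: "rat_complex 1" by (simp_all add: rat_complex_def)
lemma rat_complex_add: "rat_complex a \<Longrightarrow> rat_complex b \<Longrightarrow> rat_complex (a + b)" by (simp add: rat_complex_def)
lemma rat_complex_mult: "rat_complex a \<Longrightarrow> rat_complex b \<Longrightarrow> rat_complex (a * b)" by (simp add: rat_complex_def)
lemma rat_complex_cnj: "rat_complex a \<Longrightarrow> rat_complex (cnj a)" by (simp add: rat_complex_def)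
lemma rat_complex_half: "rat_complex (1/2)" by (simp add: rat_complex_def)
lemma rat_complex_sum: "(\<And>i. i \<in> I \<Longrightarrow> rat_complex (f i)) \<Longrightarrow> rat_complex (sum f I)"
  by (induction I rule: infinite_finite_induct) (simp_all add: rat_complex_add)

definition vars_below :: "nat \<Rightarrow> ncpoly \<Rightarrow> bool" where
  "vars_below N p \<longleftrightarrow> (\<forall>w\<in>Poly_Mapping.keys p. set w \<subseteq> {..<N})"

lemma rat_ncpolys_iff: "p \<in> rat_ncpolys N \<longleftrightarrow> vars_below N p \<and> (\<forall>w. rat_complex (Poly_Mapping.lookup p w))"
proof -
  have "(\<forall>w\<in>Poly_Mapping.keys p. rat_complex (Poly_Mapping.lookup p w)) \<longleftrightarrow> (\<forall>w. rat_complex (Poly_Mapping.lookup p w))"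
    by (metis in_keys_iff rat_complex_0)
  then show ?thesis unfolding rat_ncpolys_def vars_below_def rat_complex_def by blast
qed

lemma rat_ncpolys_mono:
  assumes "N \<le> N'" shows "rat_ncpolys N \<subseteq> rat_ncpolys N'"
proof
  fix p assume "p \<in> rat_ncpolys N"
  moreover have "{..<N} \<subseteq> {..<N'}" using assms by auto
  ultimately show "p \<in> rat_ncpolys N'" unfolding rat_ncpolys_iff vars_below_def by (meson subset_trans)
qed

lemma rat_sum:
  assumes "\<And>i. i \<in> I \<Longrightarrow> f i \<in> rat_ncpolys N"
  shows "sum f I \<in> rat_ncpolys N"
proof -
  have "vars_below N (sum f I)"
    unfolding vars_below_def
  proof
    fix w assume "w \<in> Poly_Mapping.keys (sum f I)"
    then obtain i where i: "i \<in> I" "w \<in> Poly_Mapping.keys (f i)" using keys_sum[of f I] by blast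
    then have "vars_below N (f i)" using assms[OF i(1)] by (simp add: rat_ncpolys_iff)
    then show "set w \<subseteq> {..<N}" using i(2) by (simp add: vars_below_def)
  qed
  moreover have "rat_complex (Poly_Mapping.lookup (sum f I) w)" for w
    unfolding lookup_sum by (rule rat_complex_sum) (use assms in \<open>simp add: rat_ncpolys_iff\<close>)
  ultimately show ?thesis by (simp add: rat_ncpolys_iff)
qed

lemma rat_add: "p \<in> rat_ncpolys N \<Longrightarrow> q \<in> rat_ncpolys N \<Longrightarrow> p + q \<in> rat_ncpolys N"
  using rat_sum[of "{True, False}" "\<lambda>b. if b then p else q" N] by simp

lemma rat_single: "rat_complex c \<Longrightarrow> set w \<subseteq> {..<N} \<Longrightarrow> Poly_Mapping.single w c \<in> rat_ncpolys N"
  by (auto simp: rat_ncpolys_iff vars_below_def lookup_single when_def)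

lemma rat_ncp_mult: "p \<in> rat_ncpolys N \<Longrightarrow> q \<in> rat_ncpolys N \<Longrightarrow> ncp_mult p q \<in> rat_ncpolys N"
  unfolding ncp_mult_def
  by (rule rat_sum, clarsimp, rule rat_single) (auto simp: rat_ncpolys_iff vars_below_def intro!: rat_complex_mult)

definition ncp_star :: "ncpoly \<Rightarrow> ncpoly" where
  "ncp_star p = (\<Sum>w\<in>Poly_Mapping.keys p. Poly_Mapping.single (rev w) (cnj (Poly_Mapping.lookup p w)))"

lemma rat_ncp_star: "p \<in> rat_ncpolys N \<Longrightarrow> ncp_star p \<in> rat_ncpolys N"
  unfolding ncp_star_def
  by (rule rat_sum, rule rat_single) (auto simp: rat_ncpolys_iff vars_below_def intro!: rat_complex_cnj)

lemma adj_alg_word: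
  assumes "\<forall>i\<in>set w. adj (xs ! i) = xs ! i"
  shows "adj (alg_word xs w) = alg_word xs (rev w)"
  using assms
proof (induction w)
  case (Cons i w)
  then show ?case by (simp add: adj_mult alg_word_append)
qed simp

lemma eval_alg_ncp_star:
  assumes "\<forall>a\<in>set xs. adj a = a" "vars_below (length xs) p"
  shows "eval_alg (ncp_star p) xs = adj (eval_alg p xs)"
proof -
  have "eval_alg (ncp_star p) xs = (\<Sum>w\<in>Poly_Mapping.keys p. scaleC (cnj (Poly_Mapping.lookup p w)) (alg_word xs (rev w)))"
    by (simp add: ncp_star_def eval_alg_sum eval_alg_single)
  also have "\<dots> = (\<Sum>w\<in>Poly_Mapping.keys p. adj (scaleC (Poly_Mapping.lookup p w) (alg_word xs w)))"
  proof (rule sum.cong[OF refl])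
    fix w assume "w \<in> Poly_Mapping.keys p"
    then have "set w \<subseteq> {..<length xs}" using assms by (auto simp: vars_below_def)
    then have "\<forall>i\<in>set w. adj (xs ! i) = xs ! i" using assms(1) by (auto intro!: nth_mem)
    then show "scaleC (cnj (Poly_Mapping.lookup p w)) (alg_word xs (rev w)) = adj (scaleC (Poly_Mapping.lookup p w) (alg_word xs w))"
      by (simp add: adj_scaleC adj_alg_word)
  qed
  also have "\<dots> = adj (eval_alg p xs)" by (simp add: eval_alg_def adj_sum alg_word_def)
  finally show ?thesis .
qed

lemma mat_eqI_k:
  assumes "A \<in> carrier_mat k k" "B \<in> carrier_mat k k" "\<And>i j. i < k \<Longrightarrow> j < k \<Longrightarrow> A $$ (i,j) = B $$ (i,j)"
  shows "A = B"
  using assms by (intro eq_matI) auto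

lemma mult_index_k:
  assumes "A \<in> carrier_mat k k" "B \<in> carrier_mat k k" "i < k" "j < k"
  shows "(A * B) $$ (i,j) = (\<Sum>t<k. A $$ (i,t) * B $$ (t,j))"
  using assms by (simp add: scalar_prod_def atLeast0LessThan)

definition mat_word :: "nat \<Rightarrow> complex mat list \<Rightarrow> nat list \<Rightarrow> complex mat" where
  "mat_word k As w = foldr (\<lambda>l acc. As ! l * acc) w (1\<^sub>m k)"

lemma mat_word_Nil[simp]: "mat_word k As [] = 1\<^sub>m k" by (simp add: mat_word_def)
lemma mat_word_Cons[simp]: "mat_word k As (l # w) = As ! l * mat_word k As w" by (simp add: mat_word_def)

definition letters_square :: "nat \<Rightarrow> complex mat list \<Rightarrow> nat list \<Rightarrow> bool" where
  "letters_square k As w \<longleftrightarrow> (\<forall>l\<in>set w. As ! l \<in> carrier_mat k k)"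

lemma mat_word_carrier: "letters_square k As w \<Longrightarrow> mat_word k As w \<in> carrier_mat k k"
  by (induction w) (auto simp: letters_square_def)

lemma mat_word_append: "letters_square k As u \<Longrightarrow> letters_square k As v \<Longrightarrow> mat_word k As (u @ v) = mat_word k As u * mat_word k As v"
proof (induction u)
  case Nil
  then show ?case using mat_word_carrier[of k As v] by simp
next
  case (Cons l u)
  then have "As ! l \<in> carrier_mat k k" "letters_square k As u" by (auto simp: letters_square_def)
  then show ?case using Cons mat_word_carrier[of k As u] mat_word_carrier[of k As v] by simp
qed

definition mat_term :: "nat \<Rightarrow> complex mat list \<Rightarrow> nat \<Rightarrow> nat \<Rightarrow> complex \<Rightarrow> nat list \<Rightarrow> complex" where
  "mat_term k As i j c w = c * mat_word k As w $$ (i,j)"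

lemma mat_term_zero: "mat_term k As i j 0 w = 0" by (simp add: mat_term_def)
lemma mat_term_add: "mat_term k As i j (a + b) w = mat_term k As i j a w + mat_term k As i j b w"
  by (simp add: mat_term_def algebra_simps)

lemma eval_mat_carrier[simp]: "eval_mat k p As \<in> carrier_mat k k"
  by (simp add: eval_mat_def)

lemma dim_eval_mat[simp]: "dim_row (eval_mat k p As) = k" "dim_col (eval_mat k p As) = k"
  by (simp_all add: eval_mat_def)

lemma eval_mat_index: "i < k \<Longrightarrow> j < k \<Longrightarrow> eval_mat k p As $$ (i,j) = coeff_sum (mat_term k As i j) p"
  by (simp add: eval_mat_def coeff_sum_def mat_term_def mat_word_def)

definition poly_letters_square :: "nat \<Rightarrow> complex mat list \<Rightarrow> ncpoly \<Rightarrow> bool" where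
  "poly_letters_square k As p \<longleftrightarrow> (\<forall>w\<in>Poly_Mapping.keys p. letters_square k As w)"

lemma eval_mat_ncp_mult:
  assumes "poly_letters_square k As p" "poly_letters_square k As q"
  shows "eval_mat k (ncp_mult p q) As = eval_mat k p As * eval_mat k q As"
proof (rule mat_eqI_k)
  show "eval_mat k p As * eval_mat k q As \<in> carrier_mat k k" by (metis eval_mat_carrier mult_carrier_mat)
  fix i j assume ij: "i < k" "j < k"
  let ?P = "Poly_Mapping.keys p" and ?Q = "Poly_Mapping.keys q"
  let ?lp = "Poly_Mapping.lookup p" and ?lq = "Poly_Mapping.lookup q"
  have "eval_mat k (ncp_mult p q) As $$ (i,j) = (\<Sum>u\<in>?P. \<Sum>v\<in>?Q. (?lp u * ?lq v) * mat_word k As (u @ v) $$ (i,j))"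
    using ij by (simp add: eval_mat_index coeff_sum_ncp_mult[of "mat_term k As i j", OF mat_term_zero mat_term_add]) (simp add: mat_term_def)
  also have "\<dots> = (\<Sum>u\<in>?P. \<Sum>v\<in>?Q. \<Sum>t<k. (?lp u * mat_word k As u $$ (i,t)) * (?lq v * mat_word k As v $$ (t,j)))"
  proof (intro sum.cong refl)
    fix u v assume uv: "u \<in> ?P" "v \<in> ?Q"
    then have c: "letters_square k As u" "letters_square k As v" using assms by (auto simp: poly_letters_square_def)
    show "(?lp u * ?lq v) * mat_word k As (u @ v) $$ (i,j) = (\<Sum>t<k. (?lp u * mat_word k As u $$ (i,t)) * (?lq v * mat_word k As v $$ (t,j)))"
      using ij by (simp add: mat_word_append[OF c] mult_index_k[OF mat_word_carrier[OF c(1)] mat_word_carrier[OF c(2)]]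
          sum_distrib_left mult_ac)
  qed
  also have "\<dots> = (\<Sum>t<k. \<Sum>u\<in>?P. \<Sum>v\<in>?Q. (?lp u * mat_word k As u $$ (i,t)) * (?lq v * mat_word k As v $$ (t,j)))"
    by (subst sum.swap) (simp add: sum.swap[of _ ?Q])
  also have "\<dots> = (\<Sum>t<k. eval_mat k p As $$ (i,t) * eval_mat k q As $$ (t,j))"
    using ij by (simp add: eval_mat_index coeff_sum_def mat_term_def sum_product)
  also have "\<dots> = (eval_mat k p As * eval_mat k q As) $$ (i,j)"
    using mult_index_k[OF eval_mat_carrier eval_mat_carrier ij] by simp
  finally show "eval_mat k (ncp_mult p q) As $$ (i,j) = (eval_mat k p As * eval_mat k q As) $$ (i,j)" .
qed simp

lemma eval_mat_add: "eval_mat k (p + q) As = eval_mat k p As + eval_mat k q As"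
proof (rule mat_eqI_k[where k=k])
  fix i j assume ij: "i < k" "j < k"
  have "(eval_mat k p As + eval_mat k q As) $$ (i,j) = eval_mat k p As $$ (i,j) + eval_mat k q As $$ (i,j)"
    using ij by simp
  then show "eval_mat k (p + q) As $$ (i,j) = (eval_mat k p As + eval_mat k q As) $$ (i,j)"
    using ij by (simp add: eval_mat_index coeff_sum_add[of "mat_term k As i j", OF mat_term_zero mat_term_add])
qed simp_all

lemma eval_mat_single_index: "i < k \<Longrightarrow> j < k \<Longrightarrow> eval_mat k (Poly_Mapping.single w c) As $$ (i,j) = c * mat_word k As w $$ (i,j)"
  by (simp add: eval_mat_index coeff_sum_single[of "mat_term k As i j", OF mat_term_zero]) (simp add: mat_term_def)

lemma eval_mat_sum_index: "i < k \<Longrightarrow> j < k \<Longrightarrow> eval_mat k (sum f I) As $$ (i,j) = (\<Sum>x\<in>I. eval_mat k (f x) As $$ (i,j))"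
  by (simp add: eval_mat_index coeff_sum_sum[of "mat_term k As i j", OF mat_term_zero mat_term_add])

lemma eval_mat_ncp_mult_const_index: "i < k \<Longrightarrow> j < k \<Longrightarrow>
   eval_mat k (ncp_mult (Poly_Mapping.single [] c) p) As $$ (i,j) = c * eval_mat k p As $$ (i,j)"
  by (simp add: eval_mat_index coeff_sum_ncp_mult_const[of "mat_term k As i j", OF mat_term_zero mat_term_add])
     (simp add: coeff_sum_def mat_term_def sum_distrib_left mult_ac)

lemma madj_carrier[simp]: "A \<in> carrier_mat k k \<Longrightarrow> madj A \<in> carrier_mat k k"
  by (simp add: madj_def)

lemma dim_madj[simp]: "dim_row (madj A) = dim_col A" "dim_col (madj A) = dim_row A"
  by (simp_all add: madj_def)

lemma madj_index: "i < dim_col A \<Longrightarrow> j < dim_row A \<Longrightarrow> madj A $$ (i,j) = cnj (A $$ (j,i))"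
  by (simp add: madj_def)

lemma madj_index_k: "A \<in> carrier_mat k k \<Longrightarrow> i < k \<Longrightarrow> j < k \<Longrightarrow> madj A $$ (i,j) = cnj (A $$ (j,i))"
  by (simp add: madj_index)

lemma madj_mult:
  assumes "A \<in> carrier_mat k k" "B \<in> carrier_mat k k"
  shows "madj (A * B) = madj B * madj A"
proof (rule mat_eqI_k)
  have AB: "A * B \<in> carrier_mat k k" using assms by (metis mult_carrier_mat)
  show "madj (A * B) \<in> carrier_mat k k" using AB by simp
  show "madj B * madj A \<in> carrier_mat k k" using assms by (metis madj_carrier mult_carrier_mat)
  fix i j assume ij: "i < k" "j < k"
  have "madj (A * B) $$ (i,j) = cnj ((A * B) $$ (j,i))"
    using madj_index_k[OF AB ij] .
  also have "\<dots> = (\<Sum>t<k. cnj (B $$ (t,i)) * cnj (A $$ (j,t)))"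
    using mult_index_k[OF assms(1,2) ij(2) ij(1)] by (simp add: mult.commute)
  also have "\<dots> = (\<Sum>t<k. madj B $$ (i,t) * madj A $$ (t,j))"
    using assms ij by (intro sum.cong refl) (simp add: madj_index)
  also have "\<dots> = (madj B * madj A) $$ (i,j)"
    using mult_index_k[OF madj_carrier[OF assms(2)] madj_carrier[OF assms(1)] ij] by simp
  finally show "madj (A * B) $$ (i,j) = (madj B * madj A) $$ (i,j)" .
qed

lemma madj_one[simp]: "madj (1\<^sub>m k) = 1\<^sub>m k"
  by (rule mat_eqI_k[where k=k]) (auto simp: madj_index)

lemma madj_madj: "A \<in> carrier_mat k k \<Longrightarrow> madj (madj A) = A"
  by (rule mat_eqI_k[where k=k]) (auto simp: madj_index)

lemma mat_word_madj:
  assumes "\<forall>l\<in>set w. As ! l \<in> sa_mats k"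
  shows "madj (mat_word k As w) = mat_word k As (rev w)"
  using assms
proof (induction w)
  case (Cons l w)
  have c: "letters_square k As w" "letters_square k As [l]" using Cons.prems by (auto simp: letters_square_def sa_mats_def)
  have Al: "As ! l \<in> carrier_mat k k" using Cons.prems by (simp add: sa_mats_def)
  have "madj (mat_word k As (l # w)) = madj (mat_word k As w) * madj (As ! l)"
    using madj_mult[OF Al mat_word_carrier[OF c(1)]] by simp
  also have "\<dots> = mat_word k As (rev w) * mat_word k As [l]"
    using Cons Al by (simp add: sa_mats_def)
  also have "\<dots> = mat_word k As (rev w @ [l])"
    using c by (simp add: mat_word_append letters_square_def)
  finally show ?case by simp
qed simp

lemma eval_mat_ncp_star:
  assumes "\<forall>w\<in>Poly_Mapping.keys p. \<forall>l\<in>set w. As ! l \<in> sa_mats k"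
  shows "madj (eval_mat k p As) = eval_mat k (ncp_star p) As"
proof (rule mat_eqI_k)
  fix i j assume ij: "i < k" "j < k"
  have "madj (eval_mat k p As) $$ (i,j) = (\<Sum>w\<in>Poly_Mapping.keys p. cnj (Poly_Mapping.lookup p w) * cnj (mat_word k As w $$ (j,i)))"
    using ij by (simp add: madj_index eval_mat_index coeff_sum_def mat_term_def cnj_sum)
  also have "\<dots> = (\<Sum>w\<in>Poly_Mapping.keys p. cnj (Poly_Mapping.lookup p w) * mat_word k As (rev w) $$ (i,j))"
  proof (rule sum.cong[OF refl])
    fix w assume "w \<in> Poly_Mapping.keys p"
    then have sa: "\<forall>l\<in>set w. As ! l \<in> sa_mats k" using assms by auto
    then have "letters_square k As w" by (auto simp: letters_square_def sa_mats_def)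
    then have "madj (mat_word k As w) $$ (i,j) = cnj (mat_word k As w $$ (j,i))"
      using madj_index_k[OF mat_word_carrier ij] by blast
    then show "cnj (Poly_Mapping.lookup p w) * cnj (mat_word k As w $$ (j,i)) = cnj (Poly_Mapping.lookup p w) * mat_word k As (rev w) $$ (i,j)"
      using mat_word_madj[OF sa] by simp
  qed
  also have "\<dots> = eval_mat k (ncp_star p) As $$ (i,j)"
    using ij by (simp add: ncp_star_def eval_mat_sum_index eval_mat_single_index)
  finally show "madj (eval_mat k p As) $$ (i,j) = eval_mat k (ncp_star p) As $$ (i,j)" .
qed simp_all

lemma alg_word_append_restrict: "set w \<subseteq> {..<length xs} \<Longrightarrow> alg_word (xs @ ys) w = alg_word xs w"
  by (induction w) (auto simp: nth_append)

lemma mat_word_append_restrict: "set w \<subseteq> {..<length As} \<Longrightarrow> mat_word k (As @ Bs) w = mat_word k As w"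
  by (induction w) (auto simp: nth_append)

lemma eval_alg_restrict:
  assumes "vars_below (length xs) p"
  shows "eval_alg p (xs @ ys) = eval_alg p xs"
  unfolding eval_alg_coeff_sum coeff_sum_def alg_term_def
proof (rule sum.cong[OF refl])
  fix w assume "w \<in> Poly_Mapping.keys p"
  then have "set w \<subseteq> {..<length xs}" using assms by (auto simp: vars_below_def)
  then show "scaleC (Poly_Mapping.lookup p w) (alg_word (xs @ ys) w) = scaleC (Poly_Mapping.lookup p w) (alg_word xs w)"
    by (simp add: alg_word_append_restrict)
qed

lemma eval_mat_restrict:
  assumes "vars_below (length As) p"
  shows "eval_mat k p (As @ Bs) = eval_mat k p As"
  by (rule mat_eqI_k) (use assms mat_word_append_restrict in \<open>auto simp: eval_mat_index coeff_sum_def mat_term_def vars_below_def intro!: sum.cong\<close>)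

definition subst_var :: "nat \<Rightarrow> ncpoly list \<Rightarrow> nat \<Rightarrow> ncpoly" where
  "subst_var N ps l = (if l < N then Poly_Mapping.single [l] 1 else ps ! (l - N))"

definition subst_word :: "nat \<Rightarrow> ncpoly list \<Rightarrow> nat list \<Rightarrow> ncpoly" where
  "subst_word N ps w = foldr (\<lambda>l acc. ncp_mult (subst_var N ps l) acc) w (Poly_Mapping.single [] 1)"

definition subst_poly :: "nat \<Rightarrow> ncpoly \<Rightarrow> ncpoly list \<Rightarrow> ncpoly" where
  "subst_poly N Q ps = (\<Sum>w\<in>Poly_Mapping.keys Q. ncp_mult (Poly_Mapping.single [] (Poly_Mapping.lookup Q w)) (subst_word N ps w))"

lemma subst_word_Nil[simp]: "subst_word N ps [] = Poly_Mapping.single [] 1" by (simp add: subst_word_def)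
lemma subst_word_Cons[simp]: "subst_word N ps (l # w) = ncp_mult (subst_var N ps l) (subst_word N ps w)" by (simp add: subst_word_def)

lemma rat_subst_word:
  assumes "\<forall>p\<in>set ps. p \<in> rat_ncpolys N" "set w \<subseteq> {..<N + length ps}"
  shows "subst_word N ps w \<in> rat_ncpolys N"
  using assms(2)
proof (induction w)
  case Nil then show ?case by (simp add: rat_single)
next
  case (Cons l w)
  have "subst_var N ps l \<in> rat_ncpolys N"
    using Cons.prems assms(1) by (auto simp: subst_var_def intro!: rat_single)
  then show ?case using Cons by (simp add: rat_ncp_mult)
qed

lemma rat_subst_poly:
  assumes "\<forall>p\<in>set ps. p \<in> rat_ncpolys N" "Q \<in> rat_ncpolys (N + length ps)"
  shows "subst_poly N Q ps \<in> rat_ncpolys N"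
  unfolding subst_poly_def
proof (rule rat_sum)
  fix w assume w: "w \<in> Poly_Mapping.keys Q"
  then have "set w \<subseteq> {..<N + length ps}" using assms(2) by (auto simp: rat_ncpolys_iff vars_below_def)
  then show "ncp_mult (Poly_Mapping.single [] (Poly_Mapping.lookup Q w)) (subst_word N ps w) \<in> rat_ncpolys N"
    using assms by (intro rat_ncp_mult rat_single rat_subst_word) (auto simp: rat_ncpolys_iff)
qed

lemma eval_alg_subst_word:
  assumes "length xs = N" "set w \<subseteq> {..<N + length ps}"
  shows "eval_alg (subst_word N ps w) xs = alg_word (xs @ map (\<lambda>p. eval_alg p xs) ps) w"
  using assms(2)
proof (induction w)
  case Nil then show ?case by (simp add: eval_alg_single)
next
  case (Cons l w)
  have "eval_alg (subst_var N ps l) xs = (xs @ map (\<lambda>p. eval_alg p xs) ps) ! l"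
    using Cons.prems assms(1) by (auto simp: subst_var_def eval_alg_single nth_append)
  then show ?case using Cons by (simp add: eval_alg_ncp_mult)
qed

lemma eval_alg_subst_poly:
  assumes "length xs = N" "Q \<in> rat_ncpolys (N + length ps)"
  shows "eval_alg (subst_poly N Q ps) xs = eval_alg Q (xs @ map (\<lambda>p. eval_alg p xs) ps)"
proof -
  have "eval_alg (subst_poly N Q ps) xs = (\<Sum>w\<in>Poly_Mapping.keys Q. scaleC (Poly_Mapping.lookup Q w) (eval_alg (subst_word N ps w) xs))"
    by (simp add: subst_poly_def eval_alg_sum eval_alg_ncp_mult_const)
  also have "\<dots> = (\<Sum>w\<in>Poly_Mapping.keys Q. scaleC (Poly_Mapping.lookup Q w) (alg_word (xs @ map (\<lambda>p. eval_alg p xs) ps) w))"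
    using assms by (intro sum.cong refl) (auto simp: eval_alg_subst_word rat_ncpolys_iff vars_below_def)
  also have "\<dots> = eval_alg Q (xs @ map (\<lambda>p. eval_alg p xs) ps)"
    by (simp add: eval_alg_def alg_word_def)
  finally show ?thesis .
qed

lemma poly_letters_square_vars: "vars_below (length As) p \<Longrightarrow> \<forall>A\<in>set As. A \<in> carrier_mat k k \<Longrightarrow> poly_letters_square k As p"
  unfolding poly_letters_square_def letters_square_def vars_below_def by (meson lessThan_iff nth_mem subsetD)

lemma eval_mat_subst_word:
  assumes "length As = N" "\<forall>A\<in>set As. A \<in> carrier_mat k k" "\<forall>p\<in>set ps. p \<in> rat_ncpolys N"
    "set w \<subseteq> {..<N + length ps}"
  shows "eval_mat k (subst_word N ps w) As = mat_word k (As @ map (\<lambda>p. eval_mat k p As) ps) w"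
  using assms(4)
proof (induction w)
  case Nil then show ?case
    by (intro mat_eqI_k) (auto simp: eval_mat_single_index)
next
  case (Cons l w)
  have l: "l < N + length ps" using Cons.prems by auto
  have rl: "subst_var N ps l \<in> rat_ncpolys N"
    using l assms(3) by (auto simp: subst_var_def intro!: rat_single)
  have rT: "subst_word N ps w \<in> rat_ncpolys N" using Cons.prems assms(3) by (auto intro!: rat_subst_word)
  have "eval_mat k (subst_var N ps l) As = (As @ map (\<lambda>p. eval_mat k p As) ps) ! l"
  proof (cases "l < N")
    case True
    then have "As ! l \<in> carrier_mat k k" using assms(1,2) by auto
    then show ?thesis using True assms(1)
      by (intro mat_eqI_k) (auto simp: subst_var_def eval_mat_single_index nth_append)
  qed (use assms(1) l in \<open>auto simp: subst_var_def nth_append\<close>)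
  moreover have "eval_mat k (subst_word N ps (l # w)) As = eval_mat k (subst_var N ps l) As * eval_mat k (subst_word N ps w) As"
    using rl rT assms(1,2) by (simp add: eval_mat_ncp_mult poly_letters_square_vars rat_ncpolys_iff)
  ultimately show ?case using Cons by simp
qed

lemma eval_mat_subst_poly:
  assumes "length As = N" "\<forall>A\<in>set As. A \<in> carrier_mat k k" "\<forall>p\<in>set ps. p \<in> rat_ncpolys N"
    "Q \<in> rat_ncpolys (N + length ps)"
  shows "eval_mat k (subst_poly N Q ps) As = eval_mat k Q (As @ map (\<lambda>p. eval_mat k p As) ps)"
proof (rule mat_eqI_k)
  fix i j assume ij: "i < k" "j < k"
  have "eval_mat k (subst_poly N Q ps) As $$ (i,j) = (\<Sum>w\<in>Poly_Mapping.keys Q. Poly_Mapping.lookup Q w * eval_mat k (subst_word N ps w) As $$ (i,j))"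
    using ij by (simp add: subst_poly_def eval_mat_sum_index eval_mat_ncp_mult_const_index)
  also have "\<dots> = (\<Sum>w\<in>Poly_Mapping.keys Q. Poly_Mapping.lookup Q w * mat_word k (As @ map (\<lambda>p. eval_mat k p As) ps) w $$ (i,j))"
    using assms by (intro sum.cong refl) (auto simp: eval_mat_subst_word rat_ncpolys_iff vars_below_def)
  also have "\<dots> = eval_mat k Q (As @ map (\<lambda>p. eval_mat k p As) ps) $$ (i,j)"
    using ij by (simp add: eval_mat_index coeff_sum_def mat_term_def)
  finally show "eval_mat k (subst_poly N Q ps) As $$ (i,j) = eval_mat k Q (As @ map (\<lambda>p. eval_mat k p As) ps) $$ (i,j)" .
qed simp_all

section \<open>Density of rational polynomials in the generated C*-algebra\<close>

lemma closure_binop: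
  fixes f :: "'a::real_normed_vector \<Rightarrow> 'a \<Rightarrow> 'a"
  assumes "\<And>a b. a \<in> S \<Longrightarrow> b \<in> S \<Longrightarrow> f a b \<in> S"
    and "continuous_on UNIV (\<lambda>z. f (fst z) (snd z))"
    and "a \<in> closure S" "b \<in> closure S"
  shows "f a b \<in> closure S"
proof -
  have sub: "(\<lambda>z. f (fst z) (snd z)) ` closure (S \<times> S) \<subseteq> closure S"
    by (rule image_closure_subset) (use continuous_on_subset[OF assms(2) subset_UNIV] assms(1) in \<open>auto intro: closure_subset[THEN subsetD]\<close>)
  have "(a, b) \<in> closure (S \<times> S)" using assms(3,4) by (simp add: closure_Times)
  from subsetD[OF sub imageI[OF this]] show ?thesis by simp
qed

lemma closure_unop:
  fixes f :: "'a::real_normed_vector \<Rightarrow> 'a"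
  assumes "\<And>a. a \<in> S \<Longrightarrow> f a \<in> S" "continuous_on UNIV f" "a \<in> closure S"
  shows "f a \<in> closure S"
proof -
  have "f ` closure S \<subseteq> closure S"
    by (rule image_closure_subset) (use continuous_on_subset[OF assms(2) subset_UNIV] assms(1) in \<open>auto intro: closure_subset[THEN subsetD]\<close>)
  then show ?thesis using assms(3) by auto
qed

definition rat_poly_values :: "'a::cstar_algebra list \<Rightarrow> 'a set" where
  "rat_poly_values xs = {eval_alg p xs | p. p \<in> rat_ncpolys (length xs)}"

lemma rat_poly_values_I: "p \<in> rat_ncpolys (length xs) \<Longrightarrow> eval_alg p xs = a \<Longrightarrow> a \<in> rat_poly_values xs"
  unfolding rat_poly_values_def by blast

lemma rat_poly_values_E:
  assumes "a \<in> rat_poly_values xs"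
  obtains p where "p \<in> rat_ncpolys (length xs)" "a = eval_alg p xs"
  using assms unfolding rat_poly_values_def by blast

lemma rat_poly_values_add: "a \<in> rat_poly_values xs \<Longrightarrow> b \<in> rat_poly_values xs \<Longrightarrow> a + b \<in> rat_poly_values xs"
  by (elim rat_poly_values_E, rule rat_poly_values_I[OF rat_add]) (simp_all add: eval_alg_add)

lemma rat_poly_values_mult: "a \<in> rat_poly_values xs \<Longrightarrow> b \<in> rat_poly_values xs \<Longrightarrow> a * b \<in> rat_poly_values xs"
  by (elim rat_poly_values_E, rule rat_poly_values_I[OF rat_ncp_mult]) (simp_all add: eval_alg_ncp_mult)

lemma rat_poly_values_adj:
  assumes "\<forall>a\<in>set xs. adj a = a" "a \<in> rat_poly_values xs"
  shows "adj a \<in> rat_poly_values xs"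
proof -
  obtain p where p: "p \<in> rat_ncpolys (length xs)" "a = eval_alg p xs"
    using assms(2) by (rule rat_poly_values_E)
  then have "eval_alg (ncp_star p) xs = adj a"
    using assms(1) by (simp add: eval_alg_ncp_star rat_ncpolys_iff)
  then show ?thesis by (rule rat_poly_values_I[OF rat_ncp_star[OF p(1)]])
qed

lemma rat_poly_values_const: "rat_complex q \<Longrightarrow> scaleC q 1 \<in> rat_poly_values xs"
  by (rule rat_poly_values_I[OF rat_single[of q "[]"]]) (simp_all add: eval_alg_single)

lemma rat_poly_values_var: "a \<in> set xs \<Longrightarrow> a \<in> rat_poly_values xs"
  by (auto simp: in_set_conv_nth intro!: rat_poly_values_I[OF rat_single, of 1 "[_]"] simp: eval_alg_single)

lemma complex_rat_approx:
  assumes "e > 0"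
  obtains q where "rat_complex q" "cmod (q - c) < e"
proof -
  obtain r1 where r1: "r1 \<in> \<rat>" "\<bar>r1 - Re c\<bar> < e/2" using rational_approximation[of "e/2"] assms by auto
  obtain r2 where r2: "r2 \<in> \<rat>" "\<bar>r2 - Im c\<bar> < e/2" using rational_approximation[of "e/2"] assms by auto
  have "cmod (Complex r1 r2 - c) \<le> \<bar>r1 - Re c\<bar> + \<bar>r2 - Im c\<bar>"
    using cmod_le[of "Complex r1 r2 - c"] by simp
  also have "\<dots> < e" using r1 r2 by simp
  finally show ?thesis using that[of "Complex r1 r2"] r1 r2 by (simp add: rat_complex_def)
qed

lemma scaleC_one_in_closure:
  fixes xs :: "'a::cstar_algebra list"
  shows "scaleC c 1 \<in> closure (rat_poly_values xs)"
  unfolding closure_approachable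
proof (intro allI impI)
  fix e :: real assume "e > 0"
  then obtain q where q: "rat_complex q" "cmod (q - c) < e" by (rule complex_rat_approx)
  have "dist (scaleC q (1::'a)) (scaleC c 1) = cmod (q - c)"
    by (simp add: dist_norm scaleC_minus_left[symmetric] norm_scaleC)
  then show "\<exists>y\<in>rat_poly_values xs. dist y (scaleC c 1) < e"
    using q rat_poly_values_const[OF q(1)] by (intro bexI[of _ "scaleC q 1"]) simp_all
qed

lemma closure_rat_poly_values_subalgebra:
  fixes xs :: "'a::cstar_algebra list"
  assumes sa: "\<forall>a\<in>set xs. adj a = a"
  shows "cstar_subalgebra (closure (rat_poly_values xs))"
  unfolding cstar_subalgebra_def
proof (intro conjI ballI allI)
  let ?D = "rat_poly_values xs"
  have cont_add: "continuous_on UNIV (\<lambda>z::'a\<times>'a. fst z + snd z)"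
    and cont_mult: "continuous_on UNIV (\<lambda>z::'a\<times>'a. fst z * snd z)"
    by (intro continuous_intros)+
  show "closed (closure ?D)" by simp
  show "1 \<in> closure ?D" using scaleC_one_in_closure[of 1] by simp
  fix a b assume a: "a \<in> closure ?D" and b: "b \<in> closure ?D"
  show "a + b \<in> closure ?D" by (rule closure_binop[OF rat_poly_values_add cont_add a b])
  show "a * b \<in> closure ?D" by (rule closure_binop[OF rat_poly_values_mult cont_mult a b])
next
  fix a assume a: "a \<in> closure (rat_poly_values xs)"
  have adj_closed: "adj b \<in> rat_poly_values xs" if "b \<in> rat_poly_values xs" for b
    by (rule rat_poly_values_adj[OF sa that])
  have cont_adj: "continuous_on UNIV (adj :: 'a \<Rightarrow> 'a)"
    by (rule linear_continuous_on[OF bounded_linear_adj])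
  show "adj a \<in> closure (rat_poly_values xs)"
    by (rule closure_unop[OF adj_closed cont_adj a])
next
  fix c a assume "a \<in> closure (rat_poly_values xs)"
  moreover have "continuous_on UNIV (\<lambda>z::'a\<times>'a. fst z * snd z)" by (intro continuous_intros)
  ultimately have "scaleC c 1 * a \<in> closure (rat_poly_values xs)"
    by (intro closure_binop[OF rat_poly_values_mult _ scaleC_one_in_closure])
  then show "scaleC c a \<in> closure (rat_poly_values xs)" by (simp flip: scaleC_mult_left)
qed

lemma generated_in_closure:
  assumes "\<forall>a\<in>set xs. adj a = a"
  shows "cstar_generated (set xs) \<subseteq> closure (rat_poly_values xs)"
  using closure_rat_poly_values_subalgebra[OF assms] rat_poly_values_var closure_subset
  unfolding cstar_generated_def by blast

lemma tendsto_alg_word: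
  assumes "\<forall>i\<in>set w. ((\<lambda>k. zs k ! i) \<longlongrightarrow> ys ! i) F"
  shows "((\<lambda>k. alg_word (zs k) w) \<longlongrightarrow> alg_word ys w) F"
  using assms by (induction w) (auto intro!: tendsto_mult)

lemma tendsto_eval_alg:
  assumes "\<forall>w\<in>Poly_Mapping.keys Q. \<forall>i\<in>set w. ((\<lambda>k. zs k ! i) \<longlongrightarrow> ys ! i) F"
  shows "((\<lambda>k. eval_alg Q (zs k)) \<longlongrightarrow> eval_alg Q ys) F"
proof -
  have "((\<lambda>k. \<Sum>w\<in>Poly_Mapping.keys Q. scaleC (Poly_Mapping.lookup Q w) (alg_word (zs k) w))
        \<longlongrightarrow> (\<Sum>w\<in>Poly_Mapping.keys Q. scaleC (Poly_Mapping.lookup Q w) (alg_word ys w))) F"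
    by (intro tendsto_sum bounded_linear.tendsto[OF bounded_linear_scaleC] tendsto_alg_word) (use assms in auto)
  then show ?thesis by (simp add: eval_alg_def alg_word_def)
qed

definition ncp_herm :: "ncpoly \<Rightarrow> ncpoly" where
  "ncp_herm p = ncp_mult (Poly_Mapping.single [] (1/2)) (p + ncp_star p)"

lemma rat_ncp_herm: "p \<in> rat_ncpolys N \<Longrightarrow> ncp_herm p \<in> rat_ncpolys N"
  unfolding ncp_herm_def by (intro rat_ncp_mult rat_single rat_add rat_ncp_star) (simp_all add: rat_complex_half)

lemma eval_alg_ncp_herm:
  assumes "\<forall>a\<in>set xs. adj a = a" "vars_below (length xs) p"
  shows "eval_alg (ncp_herm p) xs = scaleC (1/2) (eval_alg p xs + adj (eval_alg p xs))"
  using assms by (simp add: ncp_herm_def eval_alg_ncp_mult_const eval_alg_add eval_alg_ncp_star)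

definition preserves_sa :: "nat \<Rightarrow> ncpoly \<Rightarrow> bool" where
  "preserves_sa n p \<longleftrightarrow> (\<forall>k As. length As = n \<longrightarrow> (\<forall>A\<in>set As. A \<in> sa_mats k) \<longrightarrow> eval_mat k p As \<in> sa_mats k)"

lemma eval_mat_ncp_herm_sa:
  assumes "p \<in> rat_ncpolys (length As)" "\<forall>A\<in>set As. A \<in> sa_mats k"
  shows "eval_mat k (ncp_herm p) As \<in> sa_mats k"
proof -
  have letters: "\<forall>w\<in>Poly_Mapping.keys p. \<forall>l\<in>set w. As ! l \<in> sa_mats k"
    using assms unfolding rat_ncpolys_iff vars_below_def by (meson lessThan_iff nth_mem subsetD)
  let ?P = "eval_mat k p As"
  have idx: "eval_mat k (ncp_herm p) As $$ (i,j) = 1/2 * (?P $$ (i,j) + cnj (?P $$ (j,i)))" if "i < k" "j < k" for i j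
  proof -
    have "eval_mat k (ncp_herm p) As $$ (i,j) = 1/2 * (?P $$ (i,j) + eval_mat k (ncp_star p) As $$ (i,j))"
      using that by (simp add: ncp_herm_def eval_mat_ncp_mult_const_index eval_mat_add)
    also have "eval_mat k (ncp_star p) As $$ (i,j) = madj ?P $$ (i,j)"
      using eval_mat_ncp_star[OF letters] by simp
    also have "\<dots> = cnj (?P $$ (j,i))" using madj_index_k[OF eval_mat_carrier that] .
    finally show ?thesis .
  qed
  have "madj (eval_mat k (ncp_herm p) As) = eval_mat k (ncp_herm p) As"
  proof (rule mat_eqI_k[where k=k])
    fix i j assume ij: "i < k" "j < k"
    have "madj (eval_mat k (ncp_herm p) As) $$ (i,j) = cnj (eval_mat k (ncp_herm p) As $$ (j,i))"
      using madj_index_k[OF eval_mat_carrier ij] .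
    also have "\<dots> = eval_mat k (ncp_herm p) As $$ (i,j)"
      using ij by (simp add: idx algebra_simps)
    finally show "madj (eval_mat k (ncp_herm p) As) $$ (i,j) = eval_mat k (ncp_herm p) As $$ (i,j)" .
  qed simp_all
  then show ?thesis by (simp add: sa_mats_def)
qed

text \<open>A self-adjoint limit of rational polynomial values is a limit of values of rational
  polynomials that preserve self-adjointness: replace an approximant by its Hermitian part.\<close>
lemma sa_approx:
  assumes sa: "\<forall>a\<in>set xs. adj a = a" and yc: "y0 \<in> closure (rat_poly_values xs)" and ysa: "adj y0 = y0" and e: "e > 0"
  obtains p where "p \<in> rat_ncpolys (length xs)" "norm (eval_alg p xs - y0) < e"
    "preserves_sa (length xs) p"
proof -
  obtain d where d: "d \<in> rat_poly_values xs" "dist d y0 < e" using yc e unfolding closure_approachable by blast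
  obtain p where p: "p \<in> rat_ncpolys (length xs)" "d = eval_alg p xs" using d(1) unfolding rat_poly_values_def by blast
  have "eval_alg (ncp_herm p) xs - y0 = scaleC (1/2) ((d - y0) + adj (d - y0))"
  proof -
    have "y0 = scaleC (1/2) (y0 + adj y0)"
      using ysa scaleC_add_left[of "1/2" "1/2" y0] by (simp add: scaleC_add_right)
    then have "eval_alg (ncp_herm p) xs - y0 = scaleC (1/2) (d + adj d) - scaleC (1/2) (y0 + adj y0)"
      using p sa by (simp add: eval_alg_ncp_herm rat_ncpolys_iff)
    then show ?thesis by (simp add: scaleC_minus_right[symmetric] adj_minus algebra_simps)
  qed
  then have "norm (eval_alg (ncp_herm p) xs - y0) \<le> 1/2 * (norm (d - y0) + norm (adj (d - y0)))"
    using norm_triangle_ineq[of "d - y0" "adj (d - y0)"] by (simp add: norm_scaleC)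
  also have "\<dots> = norm (d - y0)" by simp
  also have "\<dots> < e" using d(2) by (simp add: dist_norm)
  finally show ?thesis
    using that[of "ncp_herm p"] rat_ncp_herm[OF p(1)] eval_mat_ncp_herm_sa[of p] p(1)
    by (auto simp: preserves_sa_def)
qed

text \<open>Written as an \<open>\<ell>\<^sup>2\<close>-norm of the
  entries, it satisfies the triangle inequality.\<close>
definition hs_sq :: "nat \<Rightarrow> complex mat \<Rightarrow> real" where
  "hs_sq k M = Re (tau k (madj M * M))"

lemma hs_sq_entries:
  assumes "M \<in> carrier_mat k k"
  shows "hs_sq k M = (\<Sum>i<k. \<Sum>t<k. (cmod (M $$ (t,i)))\<^sup>2) / real k"
proof -
  have "mtrace (madj M * M) = (\<Sum>i<k. (madj M * M) $$ (i,i))"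
    using assms by (simp add: mtrace_def)
  also have "\<dots> = (\<Sum>i<k. \<Sum>t<k. cnj (M $$ (t,i)) * M $$ (t,i))"
    by (intro sum.cong refl) (simp add: mult_index_k[OF madj_carrier[OF assms] assms] madj_index_k[OF assms])
  also have "\<dots> = (\<Sum>i<k. \<Sum>t<k. complex_of_real ((cmod (M $$ (t,i)))\<^sup>2))"
    by (intro sum.cong refl) (metis complex_norm_square mult.commute)
  finally show ?thesis by (simp add: hs_sq_def tau_def)
qed

lemma tuple_diff_length[simp]: "length (tuple_diff a b) = min (length a) (length b)"
  by (simp add: tuple_diff_def)

lemma tuple_diff_nth: "l < length a \<Longrightarrow> l < length b \<Longrightarrow> tuple_diff a b ! l = a ! l - b ! l"
  by (simp add: tuple_diff_def)

lemma norm2_hs_sq: "norm2 k D = sqrt (\<Sum>l<length D. hs_sq k (D ! l))"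
  by (simp add: norm2_def hs_sq_def)

definition square_tuple :: "nat \<Rightarrow> complex mat list \<Rightarrow> bool" where
  "square_tuple k D \<longleftrightarrow> (\<forall>M\<in>set D. M \<in> carrier_mat k k)"

lemma square_tuple_nth: "square_tuple k D \<Longrightarrow> l < length D \<Longrightarrow> D ! l \<in> carrier_mat k k"
  by (simp add: square_tuple_def)

lemma sum3: "(\<Sum>x\<in>A \<times> B \<times> C. h x) = (\<Sum>a\<in>A. \<Sum>b\<in>B. \<Sum>c\<in>C. h (a,b,c))"
  by (simp add: sum.cartesian_product case_prod_beta)

lemma norm2_L2:
  assumes "square_tuple k D"
  shows "norm2 k D = L2_set (\<lambda>(l,i,t). cmod (D ! l $$ (t,i)) / sqrt k) ({..<length D} \<times> {..<k} \<times> {..<k})"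
proof -
  have "(\<Sum>l<length D. hs_sq k (D ! l)) = (\<Sum>l<length D. \<Sum>i<k. \<Sum>t<k. (cmod (D ! l $$ (t,i)))\<^sup>2 / real k)"
    using assms by (simp add: hs_sq_entries square_tuple_nth sum_divide_distrib)
  also have "\<dots> = (\<Sum>x\<in>{..<length D} \<times> {..<k} \<times> {..<k}. ((\<lambda>(l,i,t). cmod (D ! l $$ (t,i)) / sqrt k) x)\<^sup>2)"
    by (simp only: sum3) (simp add: power_divide)
  finally show ?thesis by (simp add: norm2_hs_sq L2_set_def)
qed

definition tuple_dist :: "nat \<Rightarrow> complex mat list \<Rightarrow> complex mat list \<Rightarrow> real" where
  "tuple_dist k a b = norm2 k (tuple_diff a b)"

lemma square_tuple_diff: "square_tuple k a \<Longrightarrow> square_tuple k b \<Longrightarrow> square_tuple k (tuple_diff a b)"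
  by (auto simp: square_tuple_def tuple_diff_def set_zip intro!: minus_carrier_mat)

lemma tuple_dist_triangle:
  assumes "square_tuple k a" "square_tuple k b" "square_tuple k c" "length a = length b" "length b = length c"
  shows "tuple_dist k a c \<le> tuple_dist k a b + tuple_dist k b c"
proof -
  let ?S = "{..<length a} \<times> {..<k} \<times> {..<k}"
  let ?f = "\<lambda>(l,i,t). cmod (tuple_diff a b ! l $$ (t,i)) / sqrt k"
  let ?g = "\<lambda>(l,i,t). cmod (tuple_diff b c ! l $$ (t,i)) / sqrt k"
  have "tuple_dist k a c = L2_set (\<lambda>(l,i,t). cmod (tuple_diff a c ! l $$ (t,i)) / sqrt k) ?S"
    using assms by (simp add: tuple_dist_def norm2_L2 square_tuple_diff)
  also have "\<dots> \<le> L2_set (\<lambda>x. ?f x + ?g x) ?S"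
  proof (rule L2_set_mono)
    fix x assume "x \<in> ?S"
    then obtain l i t where x: "x = (l,i,t)" "l < length a" "i < k" "t < k" by auto
    have c: "a ! l \<in> carrier_mat k k" "b ! l \<in> carrier_mat k k" "c ! l \<in> carrier_mat k k"
      using x assms by (auto simp: square_tuple_nth)
    have "tuple_diff a c ! l $$ (t,i) = tuple_diff a b ! l $$ (t,i) + tuple_diff b c ! l $$ (t,i)"
      using x c assms by (simp add: tuple_diff_nth)
    then have "cmod (tuple_diff a c ! l $$ (t,i)) \<le> cmod (tuple_diff a b ! l $$ (t,i)) + cmod (tuple_diff b c ! l $$ (t,i))"
      by (simp add: norm_triangle_ineq)
    then show "(\<lambda>(l,i,t). cmod (tuple_diff a c ! l $$ (t,i)) / sqrt k) x \<le> ?f x + ?g x"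
      using x by (simp add: add_divide_distrib[symmetric] divide_right_mono)
  qed auto
  also have "\<dots> \<le> L2_set ?f ?S + L2_set ?g ?S" by (rule L2_set_triangle_ineq)
  also have "\<dots> = tuple_dist k a b + tuple_dist k b c"
    using assms by (simp add: tuple_dist_def norm2_L2 square_tuple_diff)
  finally show ?thesis .
qed

lemma tuple_dist_sym:
  assumes "square_tuple k a" "square_tuple k b" "length a = length b"
  shows "tuple_dist k a b = tuple_dist k b a"
proof -
  have "L2_set (\<lambda>(l,i,t). cmod (tuple_diff a b ! l $$ (t,i)) / sqrt k) ({..<length a} \<times> {..<k} \<times> {..<k})
      = L2_set (\<lambda>(l,i,t). cmod (tuple_diff b a ! l $$ (t,i)) / sqrt k) ({..<length a} \<times> {..<k} \<times> {..<k})"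
  proof (rule L2_set_cong[OF refl])
    fix x assume "x \<in> {..<length a} \<times> {..<k} \<times> {..<k}"
    then obtain l i t where x: "x = (l,i,t)" "l < length a" "i < k" "t < k" by auto
    have c: "a ! l \<in> carrier_mat k k" "b ! l \<in> carrier_mat k k"
      using x assms by (auto simp: square_tuple_nth)
    show "(\<lambda>(l,i,t). cmod (tuple_diff a b ! l $$ (t,i)) / sqrt k) x = (\<lambda>(l,i,t). cmod (tuple_diff b a ! l $$ (t,i)) / sqrt k) x"
      using x c assms by (simp add: tuple_diff_nth norm_minus_commute)
  qed
  then show ?thesis using assms by (simp add: tuple_dist_def norm2_L2 square_tuple_diff)
qed

lemma mtrace_k:
  assumes A: "A \<in> carrier_mat k k" and B: "B \<in> carrier_mat k k"
  shows "mtrace (A * B) = (\<Sum>i<k. \<Sum>t<k. A $$ (i,t) * B $$ (t,i))"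
proof -
  have d: "dim_row (A * B) = k" using A by (simp add: carrier_matD)
  show ?thesis unfolding mtrace_def d
    by (rule sum.cong[OF refl]) (rule mult_index_k[OF A B], simp_all)
qed

lemma mtrace_comm:
  assumes "A \<in> carrier_mat k k" "B \<in> carrier_mat k k"
  shows "mtrace (A * B) = mtrace (B * A)"
  unfolding mtrace_k[OF assms] mtrace_k[OF assms(2,1)]
  by (subst sum.swap) (simp add: mult.commute)

lemma unitary_carrier: "W \<in> unitary_mats k \<Longrightarrow> W \<in> carrier_mat k k"
  by (simp add: unitary_mats_def)

lemma hs_sq_conj:
  assumes W: "W \<in> unitary_mats k" and M: "M \<in> carrier_mat k k"
  shows "hs_sq k (W * M * madj W) = hs_sq k M"
proof -
  have cW: "W \<in> carrier_mat k k" using W by (simp add: unitary_mats_def)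
  have cWs: "madj W \<in> carrier_mat k k" using cW by simp
  have cMs: "madj M \<in> carrier_mat k k" using M by simp
  have WsW: "madj W * W = 1\<^sub>m k" using W by (simp add: unitary_mats_def)
  have cWM: "W * M \<in> carrier_mat k k" using cW M by (rule mult_carrier_mat)
  have cWMs: "W * madj M \<in> carrier_mat k k" using cW cMs by (rule mult_carrier_mat)
  have "madj (W * M * madj W) = madj (madj W) * madj (W * M)"
    by (rule madj_mult[OF cWM cWs])
  also have "\<dots> = W * (madj M * madj W)"
    using cW M by (simp add: madj_madj madj_mult)
  also have "\<dots> = W * madj M * madj W"
    using assoc_mult_mat[OF cW cMs cWs] by simp
  finally have 1: "madj (W * M * madj W) = W * madj M * madj W" .
  have "(W * madj M * madj W) * (W * M * madj W) = (W * madj M) * (madj W * (W * M * madj W))"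
    by (rule assoc_mult_mat[OF cWMs cWs mult_carrier_mat[OF cWM cWs]])
  also have "madj W * (W * M * madj W) = (madj W * W) * (M * madj W)"
    using assoc_mult_mat[OF cW M cWs] assoc_mult_mat[OF cWs cW mult_carrier_mat[OF M cWs]] by simp
  also have "\<dots> = M * madj W" using WsW M cWs by simp
  also have "(W * madj M) * (M * madj W) = W * (madj M * M) * madj W"
    using assoc_mult_mat[OF cW cMs mult_carrier_mat[OF M cWs]] assoc_mult_mat[OF cMs M cWs] assoc_mult_mat[OF cW mult_carrier_mat[OF cMs M] cWs] by simp
  finally have 2: "madj (W * M * madj W) * (W * M * madj W) = W * (madj M * M) * madj W"
    using 1 by simp
  have cX: "madj M * M \<in> carrier_mat k k" using cMs M by (rule mult_carrier_mat)
  have "mtrace (W * (madj M * M) * madj W) = mtrace (madj W * (W * (madj M * M)))"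
    by (rule mtrace_comm[OF mult_carrier_mat[OF cW cX] cWs])
  also have "\<dots> = mtrace (madj M * M)"
    using assoc_mult_mat[OF cWs cW cX, symmetric] WsW left_mult_one_mat[OF cX] by simp
  finally show ?thesis using 2 by (simp add: hs_sq_def tau_def)
qed

definition conj_tuple :: "complex mat \<Rightarrow> complex mat list \<Rightarrow> complex mat list" where
  "conj_tuple W a = map (\<lambda>B. W * B * madj W) a"

lemma conj_tuple_length[simp]: "length (conj_tuple W a) = length a" by (simp add: conj_tuple_def)

lemma square_tuple_conj_tuple: "W \<in> carrier_mat k k \<Longrightarrow> square_tuple k a \<Longrightarrow> square_tuple k (conj_tuple W a)"
  by (auto simp: square_tuple_def conj_tuple_def intro!: mult_carrier_mat)

lemma tuple_dist_conj:
  assumes W: "W \<in> unitary_mats k" and a: "square_tuple k a" and b: "square_tuple k b" and len: "length a = length b"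
  shows "tuple_dist k (conj_tuple W a) (conj_tuple W b) = tuple_dist k a b"
proof -
  have cW: "W \<in> carrier_mat k k" using W by (simp add: unitary_mats_def)
  have "hs_sq k (tuple_diff (conj_tuple W a) (conj_tuple W b) ! l) = hs_sq k (tuple_diff a b ! l)" if l: "l < length a" for l
  proof -
    have ca: "a ! l \<in> carrier_mat k k" and cb: "b ! l \<in> carrier_mat k k" using a b l len by (auto simp: square_tuple_nth)
    have "W * (a ! l) * madj W - W * (b ! l) * madj W = W * (a ! l - b ! l) * madj W"
      by (simp only: mult_minus_distrib_mat[OF cW ca cb] minus_mult_distrib_mat[OF mult_carrier_mat[OF cW ca] mult_carrier_mat[OF cW cb] madj_carrier[OF cW]])
    then have "tuple_diff (conj_tuple W a) (conj_tuple W b) ! l = W * (a ! l - b ! l) * madj W"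
      using l len by (simp add: tuple_diff_nth conj_tuple_def)
    moreover have "tuple_diff a b ! l = a ! l - b ! l" using l len by (simp add: tuple_diff_nth)
    ultimately show ?thesis using hs_sq_conj[OF W minus_carrier_mat[OF cb]] by simp
  qed
  then show ?thesis using len by (simp add: tuple_dist_def norm2_hs_sq)
qed

lemma unitary_mult: "V \<in> unitary_mats k \<Longrightarrow> W \<in> unitary_mats k \<Longrightarrow> W * V \<in> unitary_mats k"
proof -
  assume V: "V \<in> unitary_mats k" and W: "W \<in> unitary_mats k"
  have cV: "V \<in> carrier_mat k k" and cW: "W \<in> carrier_mat k k" using V W by (simp_all add: unitary_mats_def)
  have cVs: "madj V \<in> carrier_mat k k" and cWs: "madj W \<in> carrier_mat k k" using cV cW by simp_all
  have m: "madj (W * V) = madj V * madj W" by (rule madj_mult[OF cW cV])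
  have "W * V * (madj V * madj W) = W * ((V * madj V) * madj W)"
    using assoc_mult_mat[OF cW cV mult_carrier_mat[OF cVs cWs]] assoc_mult_mat[OF cV cVs cWs] by simp
  also have "\<dots> = 1\<^sub>m k" using V W left_mult_one_mat[OF cWs] by (simp add: unitary_mats_def)
  finally have 1: "W * V * madj (W * V) = 1\<^sub>m k" using m by simp
  have "madj V * madj W * (W * V) = madj V * ((madj W * W) * V)"
    using assoc_mult_mat[OF cVs cWs mult_carrier_mat[OF cW cV]] assoc_mult_mat[OF cWs cW cV] by simp
  also have "\<dots> = 1\<^sub>m k" using V W cV by (simp add: unitary_mats_def)
  finally have 2: "madj (W * V) * (W * V) = 1\<^sub>m k" using m by simp
  show ?thesis using 1 2 mult_carrier_mat[OF cW cV] by (simp add: unitary_mats_def)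
qed

lemma unitary_madj: "V \<in> unitary_mats k \<Longrightarrow> madj V \<in> unitary_mats k"
  by (auto simp: unitary_mats_def madj_madj)

lemma conj_tuple_comp:
  assumes cW: "W \<in> carrier_mat k k" and cV: "V \<in> carrier_mat k k" and a: "square_tuple k a"
  shows "conj_tuple W (conj_tuple V a) = conj_tuple (W * V) a"
proof -
  have "W * (V * B * madj V) * madj W = W * V * B * madj (W * V)" if B: "B \<in> carrier_mat k k" for B
  proof -
    have cVs: "madj V \<in> carrier_mat k k" and cWs: "madj W \<in> carrier_mat k k" using cV cW by simp_all
    have "W * V * B * madj (W * V) = W * V * B * (madj V * madj W)" by (simp add: madj_mult[OF cW cV])
    also have "\<dots> = W * (V * B * madj V) * madj W"
      using assoc_mult_mat[OF cW cV B] assoc_mult_mat[OF cW mult_carrier_mat[OF cV B] cVs] assoc_mult_mat[OF mult_carrier_mat[OF cW cV] B mult_carrier_mat[OF cVs cWs]]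
        assoc_mult_mat[OF mult_carrier_mat[OF cW mult_carrier_mat[OF cV B]] cVs cWs] by simp
    finally show ?thesis by simp
  qed
  then show ?thesis using a by (auto simp: conj_tuple_def square_tuple_def)
qed

lemma conj_tuple_inv:
  assumes V: "V \<in> unitary_mats k" and a: "square_tuple k a"
  shows "conj_tuple V (conj_tuple (madj V) a) = a"
proof -
  have cV: "V \<in> carrier_mat k k" using V by (simp add: unitary_mats_def)
  have "conj_tuple V (conj_tuple (madj V) a) = conj_tuple (V * madj V) a"
    using conj_tuple_comp[OF cV madj_carrier[OF cV] a] .
  also have "\<dots> = a"
  proof -
    have "V * madj V = 1\<^sub>m k" using V by (simp add: unitary_mats_def)
    then show ?thesis using a by (auto simp: conj_tuple_def square_tuple_def intro!: map_idI)
  qed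
  finally show ?thesis .
qed

section \<open>Orbit balls and covering numbers\<close>

lemma orbit_ball_iff:
  "a \<in> orbit_ball k c w \<longleftrightarrow> length a = length c \<and> square_tuple k a \<and> (\<exists>W\<in>unitary_mats k. tuple_dist k a (conj_tuple W c) < w)"
  by (simp add: orbit_ball_def square_tuple_def tuple_dist_def conj_tuple_def)

lemma ball_shift:
  assumes a: "a \<in> orbit_ball k c w" and s: "s \<in> orbit_ball k c w" and c: "square_tuple k c"
  shows "a \<in> orbit_ball k s (2 * w)"
proof -
  obtain W where W: "W \<in> unitary_mats k" "tuple_dist k a (conj_tuple W c) < w" and la: "length a = length c" and ca: "square_tuple k a"
    using a by (auto simp: orbit_ball_iff)
  obtain V where V: "V \<in> unitary_mats k" "tuple_dist k s (conj_tuple V c) < w" and ls: "length s = length c" and cs: "square_tuple k s"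
    using s by (auto simp: orbit_ball_iff)
  have cW: "W \<in> carrier_mat k k" and cV: "V \<in> carrier_mat k k" using W V by (simp_all add: unitary_carrier)
  let ?U = "W * madj V"
  have U: "?U \<in> unitary_mats k" by (rule unitary_mult[OF unitary_madj[OF V(1)] W(1)])
  have csV: "square_tuple k (conj_tuple (madj V) s)" using cs cV by (simp add: square_tuple_conj_tuple)
  have eq: "conj_tuple ?U s = conj_tuple W (conj_tuple (madj V) s)"
    using conj_tuple_comp[OF cW madj_carrier[OF cV] cs] by simp
  have "tuple_dist k (conj_tuple W c) (conj_tuple ?U s) = tuple_dist k c (conj_tuple (madj V) s)"
    unfolding eq using tuple_dist_conj[OF W(1) c csV] ls by simp
  also have "\<dots> = tuple_dist k (conj_tuple V c) (conj_tuple V (conj_tuple (madj V) s))"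
    using tuple_dist_conj[OF V(1) c csV] ls by simp
  also have "\<dots> = tuple_dist k (conj_tuple V c) s" using conj_tuple_inv[OF V(1) cs] by simp
  also have "\<dots> = tuple_dist k s (conj_tuple V c)"
    using tuple_dist_sym[OF square_tuple_conj_tuple[OF cV c] cs] ls by simp
  finally have d2: "tuple_dist k (conj_tuple W c) (conj_tuple ?U s) < w" using V(2) by simp
  have "tuple_dist k a (conj_tuple ?U s) \<le> tuple_dist k a (conj_tuple W c) + tuple_dist k (conj_tuple W c) (conj_tuple ?U s)"
    by (rule tuple_dist_triangle) (use ca square_tuple_conj_tuple[OF cW c] square_tuple_conj_tuple[OF unitary_carrier[OF U] cs] la ls in auto)
  also have "\<dots> < 2 * w" using W(2) d2 by simp
  finally show ?thesis using U la ls ca by (auto simp: orbit_ball_iff)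
qed

text \<open>Covering a subset by orbit balls centred in the subset needs at most as many balls of
  twice the radius as covering the whole set: recentre each useful ball at a point of the subset.\<close>
lemma o2_mono:
  assumes sub: "\<Sigma>' \<subseteq> \<Sigma>" and cls: "\<forall>b\<in>\<Sigma>. square_tuple k b"
  shows "o2 k \<Sigma>' (2 * w) \<le> o2 k \<Sigma> w"
  unfolding o2_def
proof (rule Inf_greatest)
  fix x assume "x \<in> {enat (card C) |C. finite C \<and> C \<subseteq> \<Sigma> \<and> \<Sigma> \<subseteq> (\<Union>B\<in>C. orbit_ball k B w)}"
  then obtain C where x: "x = enat (card C)" and C: "finite C" "C \<subseteq> \<Sigma>" "\<Sigma> \<subseteq> (\<Union>B\<in>C. orbit_ball k B w)"
    by blast
  let ?C0 = "{c\<in>C. \<Sigma>' \<inter> orbit_ball k c w \<noteq> {}}"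
  define f where "f c = (SOME s. s \<in> \<Sigma>' \<inter> orbit_ball k c w)" for c
  have f: "f c \<in> \<Sigma>' \<inter> orbit_ball k c w" if "c \<in> ?C0" for c
  proof -
    have "\<exists>s. s \<in> \<Sigma>' \<inter> orbit_ball k c w" using that by blast
    then show ?thesis unfolding f_def by (rule someI_ex)
  qed
  let ?C' = "f ` ?C0"
  have fin: "finite ?C'" using C(1) by simp
  have sub': "?C' \<subseteq> \<Sigma>'" using f by auto
  have cov: "\<Sigma>' \<subseteq> (\<Union>B\<in>?C'. orbit_ball k B (2 * w))"
  proof
    fix a assume a: "a \<in> \<Sigma>'"
    then obtain c where c: "c \<in> C" "a \<in> orbit_ball k c w" using C(3) sub by blast
    then have c0: "c \<in> ?C0" using a by blast
    have "a \<in> orbit_ball k (f c) (2 * w)"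
      by (rule ball_shift[OF c(2)]) (use f[OF c0] cls C(2) c(1) in auto)
    then show "a \<in> (\<Union>B\<in>?C'. orbit_ball k B (2 * w))" using c0 by blast
  qed
  have "o2 k \<Sigma>' (2 * w) \<le> enat (card ?C')"
    unfolding o2_def by (rule Inf_lower, rule CollectI, intro exI[of _ ?C'] conjI refl fin sub' cov)
  also have "\<dots> \<le> enat (card C)"
    using card_image_le[of ?C0 f] card_mono[OF C(1), of ?C0] C(1) by simp
  finally show "Inf {enat (card C) |C. finite C \<and> C \<subseteq> \<Sigma>' \<and> \<Sigma>' \<subseteq> (\<Union>B\<in>C. orbit_ball k B (2 * w))} \<le> x"
    unfolding x o2_def .
qed

definition cov_growth :: "(nat \<Rightarrow> complex mat list set) \<Rightarrow> real \<Rightarrow> ereal" where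
  "cov_growth \<Sigma> w = limsup (\<lambda>k. log_cov (o2 k (\<Sigma> k) w) / ereal ((real k)\<^sup>2))"

lemma Ktop_cov_growth:
  "Ktop xs ys P w = (SUP R\<in>{0<..}. INF \<epsilon>\<in>{0<..}. INF r\<in>{1..}. cov_growth (\<lambda>k. Gamma_top xs ys P R k \<epsilon> r) w)"
  by (simp add: Ktop_def cov_growth_def)

lemma log_cov_mono:
  assumes "N \<le> M"
  shows "log_cov N \<le> log_cov M"
proof (cases M)
  case infinity then show ?thesis by (simp add: log_cov_def)
next
  case (enat b)
  then obtain a where a: "N = enat a" "a \<le> b" using assms by (cases N) auto
  show ?thesis
  proof (cases "a = 0")
    case True then have "N = 0" using a by (simp add: zero_enat_def)
    then show ?thesis by (simp add: log_cov_def)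
  next
    case False
    then have "ln (real a) \<le> ln (real b)" using a by simp
    then show ?thesis using a False enat by (auto simp: log_cov_def zero_enat_def)
  qed
qed

lemma cov_growth_mono:
  assumes sub: "\<And>k. \<Sigma>' k \<subseteq> \<Sigma> k" and sq: "\<And>k b. b \<in> \<Sigma> k \<Longrightarrow> square_tuple k b"
  shows "cov_growth \<Sigma>' (2 * w) \<le> cov_growth \<Sigma> w"
  unfolding cov_growth_def
proof (rule Limsup_mono)
  show "\<forall>\<^sub>F k in sequentially. log_cov (o2 k (\<Sigma>' k) (2 * w)) / ereal ((real k)\<^sup>2)
      \<le> log_cov (o2 k (\<Sigma> k) w) / ereal ((real k)\<^sup>2)"
    unfolding eventually_sequentially
  proof (intro exI[of _ 1] allI impI)
    fix k :: nat assume "k \<ge> 1"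
    then have "ereal ((real k)\<^sup>2) > 0" by simp
    moreover have "log_cov (o2 k (\<Sigma>' k) (2 * w)) \<le> log_cov (o2 k (\<Sigma> k) w)"
      using sub sq by (intro log_cov_mono o2_mono) auto
    ultimately show "log_cov (o2 k (\<Sigma>' k) (2 * w)) / ereal ((real k)\<^sup>2) \<le> log_cov (o2 k (\<Sigma> k) w) / ereal ((real k)\<^sup>2)"
      by (rule ereal_divide_right_mono[rotated])
  qed
qed

lemma Gamma_top_square: "As \<in> Gamma_top xs ys P R k \<epsilon> r \<Longrightarrow> square_tuple k As"
  by (auto simp: Gamma_top_def square_tuple_def sa_mats_def)

section \<open>Comparison of orbit dimensions\<close>

definition microstates_dominated ::
    "'a::cstar_algebra list \<Rightarrow> 'a list \<Rightarrow> (nat \<Rightarrow> ncpoly) \<Rightarrow> 'a list \<Rightarrow> 'a list \<Rightarrow> (nat \<Rightarrow> ncpoly) \<Rightarrow> bool" where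
  "microstates_dominated xs ys P xs' ys' P' \<longleftrightarrow>
    (\<forall>R>0. \<exists>R'>0. \<forall>\<epsilon>>0. \<forall>r\<ge>1. \<exists>\<epsilon>'>0. \<exists>r'\<ge>1.
       \<forall>k. Gamma_top xs ys P R k \<epsilon>' r' \<subseteq> Gamma_top xs' ys' P' R' k \<epsilon> r)"

lemma microstates_dominatedI:
  assumes radius_pos: "\<And>R. R > 0 \<Longrightarrow> \<rho> R > 0"
    and incl: "\<And>R \<epsilon> r. R > 0 \<Longrightarrow> \<epsilon> > 0 \<Longrightarrow> r \<ge> 1 \<Longrightarrow>
      \<exists>\<epsilon>'>0. \<exists>r'\<ge>1. \<forall>k. Gamma_top xs ys P R k \<epsilon>' r' \<subseteq> Gamma_top xs' ys' P' (\<rho> R) k \<epsilon> r"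
  shows "microstates_dominated xs ys P xs' ys' P'"
  unfolding microstates_dominated_def
proof (intro allI impI)
  fix R :: real assume "R > 0"
  then show "\<exists>R'>0. \<forall>\<epsilon>>0. \<forall>r\<ge>1. \<exists>\<epsilon>'>0. \<exists>r'\<ge>1. \<forall>k. Gamma_top xs ys P R k \<epsilon>' r' \<subseteq> Gamma_top xs' ys' P' R' k \<epsilon> r"
    using radius_pos incl by (intro exI[of _ "\<rho> R"]) simp
qed

lemma Ktop_le_if_dominated:
  fixes xs ys xs' ys' :: "'a::cstar_algebra list"
  assumes "microstates_dominated xs ys P xs' ys' P'"
  shows "Ktop xs ys P (2 * w) \<le> Ktop xs' ys' P' w"
  unfolding Ktop_cov_growth
proof (rule SUP_mono)
  fix R :: real assume "R \<in> {0<..}"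
  then obtain R' where R': "R' > 0"
    and incl_R: "\<forall>\<epsilon>>0. \<forall>r\<ge>1. \<exists>\<epsilon>'>0. \<exists>r'\<ge>1. \<forall>k. Gamma_top xs ys P R k \<epsilon>' r' \<subseteq> Gamma_top xs' ys' P' R' k \<epsilon> r"
    using assms unfolding microstates_dominated_def by auto
  have "(INF \<epsilon>\<in>{0<..}. INF r\<in>{1..}. cov_growth (\<lambda>k. Gamma_top xs ys P R k \<epsilon> r) (2 * w))
      \<le> (INF \<epsilon>\<in>{0<..}. INF r\<in>{1..}. cov_growth (\<lambda>k. Gamma_top xs' ys' P' R' k \<epsilon> r) w)"
  proof (intro INF_greatest)
    fix \<epsilon> :: real and r :: nat assume "\<epsilon> \<in> {0<..}" "r \<in> {1..}"
    then obtain \<epsilon>' r' where "\<epsilon>' > 0" "r' \<ge> 1"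
      and sub: "\<And>k. Gamma_top xs ys P R k \<epsilon>' r' \<subseteq> Gamma_top xs' ys' P' R' k \<epsilon> r"
      using incl_R[rule_format, of \<epsilon> r] by auto
    then have "(INF \<epsilon>\<in>{0<..}. INF r\<in>{1..}. cov_growth (\<lambda>k. Gamma_top xs ys P R k \<epsilon> r) (2 * w))
        \<le> cov_growth (\<lambda>k. Gamma_top xs ys P R k \<epsilon>' r') (2 * w)"
      by (intro INF_lower2[of \<epsilon>'] INF_lower) auto
    also have "\<dots> \<le> cov_growth (\<lambda>k. Gamma_top xs' ys' P' R' k \<epsilon> r) w"
      by (rule cov_growth_mono[OF sub Gamma_top_square])
    finally show "(INF \<epsilon>\<in>{0<..}. INF r\<in>{1..}. cov_growth (\<lambda>k. Gamma_top xs ys P R k \<epsilon> r) (2 * w))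
        \<le> cov_growth (\<lambda>k. Gamma_top xs' ys' P' R' k \<epsilon> r) w" .
  qed
  then show "\<exists>R'\<in>{0<..}. (INF \<epsilon>\<in>{0<..}. INF r\<in>{1..}. cov_growth (\<lambda>k. Gamma_top xs ys P R k \<epsilon> r) (2 * w))
      \<le> (INF \<epsilon>\<in>{0<..}. INF r\<in>{1..}. cov_growth (\<lambda>k. Gamma_top xs' ys' P' R' k \<epsilon> r) w)"
    using R' by auto
qed

section \<open>Forgetting the extra variables\<close>

lemma Gamma_top_Nil:
  "As \<in> Gamma_top xs [] P R k \<epsilon> r \<longleftrightarrow> length As = length xs \<and> (\<forall>A\<in>set As. A \<in> sa_mats k) \<and>
     (\<forall>A\<in>set As. opnorm k A \<le> R) \<and>
     (\<forall>j<r. \<bar>opnorm k (eval_mat k (P j) As) - norm (eval_alg (P j) xs)\<bar> \<le> \<epsilon>)"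
  by (simp add: Gamma_top_def)

lemma Gamma_top_Nil_tested:
  assumes "As \<in> Gamma_top xs [] P R k \<epsilon> r" and "p \<in> P ` {..<r}"
  shows "\<bar>opnorm k (eval_mat k p As) - norm (eval_alg p xs)\<bar> \<le> \<epsilon>"
  using assms by (auto simp: Gamma_top_Nil)

lemma finite_in_range_prefix:
  fixes f :: "nat \<Rightarrow> 'b"
  assumes "finite F" "F \<subseteq> range f"
  obtains r where "r \<ge> 1" "F \<subseteq> f ` {..<r}"
proof
  let ?r = "Suc (Max (inv_into UNIV f ` F))"
  show "?r \<ge> 1" by simp
  show "F \<subseteq> f ` {..<?r}"
  proof
    fix p assume p: "p \<in> F"
    have "inv_into UNIV f p < ?r" using assms(1) p by (simp add: le_imp_less_Suc)
    moreover have "f (inv_into UNIV f p) = p" using assms(2) p by (intro f_inv_into_f) blast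
    ultimately show "p \<in> f ` {..<?r}" by (metis imageI lessThan_iff)
  qed
qed

text \<open>A microstate for \<open>x : y\<close> is one for \<open>x\<close> (same radius and tolerance), provided every test
  polynomial in \<open>x\<close> occurs among the test polynomials in \<open>x, y\<close>: it suffices to test enough of the
  latter to reach the first \<open>r\<close> of the former.\<close>
lemma Gamma_top_forget:
  fixes x y :: "'a::cstar_algebra list"
  assumes P_in_Q: "\<And>j. P j \<in> range Q" and P_vars: "\<And>j. vars_below (length x) (P j)"
  shows "\<exists>r'\<ge>1. \<forall>k. Gamma_top x y Q R k \<epsilon> r' \<subseteq> Gamma_top x [] P R k \<epsilon> r"
proof -
  obtain r' where "r' \<ge> 1" and tested: "P ` {..<r} \<subseteq> Q ` {..<r'}"
    by (rule finite_in_range_prefix[of "P ` {..<r}" Q]) (use P_in_Q in auto)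
  have "Gamma_top x y Q R k \<epsilon> r' \<subseteq> Gamma_top x [] P R k \<epsilon> r" for k
  proof
    fix As assume "As \<in> Gamma_top x y Q R k \<epsilon> r'"
    then obtain Bs where lAs: "length As = length x" and saAs: "\<forall>A\<in>set As. A \<in> sa_mats k"
      and nAB: "\<forall>C\<in>set (As @ Bs). opnorm k C \<le> R"
      and cons: "\<forall>i<r'. \<bar>opnorm k (eval_mat k (Q i) (As @ Bs)) - norm (eval_alg (Q i) (x @ y))\<bar> \<le> \<epsilon>"
      by (auto simp: Gamma_top_def)
    have "\<bar>opnorm k (eval_mat k (P j) As) - norm (eval_alg (P j) x)\<bar> \<le> \<epsilon>" if "j < r" for j
    proof -
      obtain i where "i < r'" "Q i = P j" using tested \<open>j < r\<close> by (metis imageE image_eqI lessThan_iff subsetD)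
      then show ?thesis
        using cons P_vars[of j] lAs by (metis eval_mat_restrict eval_alg_restrict)
    qed
    then show "As \<in> Gamma_top x [] P R k \<epsilon> r"
      using lAs saAs nAB by (simp add: Gamma_top_Nil)
  qed
  then show ?thesis using \<open>r' \<ge> 1\<close> by blast
qed

lemma microstates_dominated_forget:
  fixes x y :: "'a::cstar_algebra list"
  assumes "\<And>j. P j \<in> range Q" and "\<And>j. vars_below (length x) (P j)"
  shows "microstates_dominated x y Q x [] P"
  by (rule microstates_dominatedI[where \<rho> = "\<lambda>R. R"]) (use Gamma_top_forget[OF assms] in auto)

section \<open>Replacing the extra variables by polynomials\<close>

text \<open>Given polynomials \<open>ps\<close> in \<open>x\<close> whose values approximate \<open>y\<close> well enough on the first \<open>r\<close>
  test polynomials, a microstate \<open>As\<close> for \<open>x\<close> extends to the microstate \<open>(As, ps(As))\<close> for \<open>x : y\<close>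
  as soon as the polynomials \<open>ps\<close> and \<open>Q j(X, ps(X))\<close>, \<open>j < r\<close>, have been tested: the test
  polynomial \<open>Q j\<close> evaluated at \<open>(As, ps(As))\<close> is \<open>Q j(X, ps(X))\<close> evaluated at \<open>As\<close>.\<close>
lemma microstate_extend:
  fixes x y :: "'a::cstar_algebra list"
  assumes As: "As \<in> Gamma_top x [] P R k \<epsilon>' r'"
    and Q_rat: "\<And>j. Q j \<in> rat_ncpolys (length x + length y)"
    and ps_len: "length ps = length y"
    and ps_rat: "\<forall>p\<in>set ps. p \<in> rat_ncpolys (length x)"
    and ps_sa: "\<forall>p\<in>set ps. preserves_sa (length x) p"
    and ps_bound: "\<forall>p\<in>set ps. norm (eval_alg p x) + \<epsilon>' \<le> R'"
    and RR': "R \<le> R'"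
    and Q_close: "\<forall>j<r. \<bar>norm (eval_alg (Q j) (x @ map (\<lambda>p. eval_alg p x) ps)) - norm (eval_alg (Q j) (x @ y))\<bar> \<le> \<epsilon> - \<epsilon>'"
    and tested: "set ps \<union> (\<lambda>j. subst_poly (length x) (Q j) ps) ` {..<r} \<subseteq> P ` {..<r'}"
  shows "As \<in> Gamma_top x y Q R' k \<epsilon> r"
proof -
  have lAs: "length As = length x" and saAs: "\<forall>A\<in>set As. A \<in> sa_mats k"
    and nAs: "\<forall>A\<in>set As. opnorm k A \<le> R"
    using As by (auto simp: Gamma_top_Nil)
  define Bs where "Bs = map (\<lambda>p. eval_mat k p As) ps"
  have saBs: "\<forall>B\<in>set Bs. B \<in> sa_mats k"
    using ps_sa lAs saAs by (auto simp: Bs_def preserves_sa_def)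
  have nBs: "opnorm k B \<le> R'" if B: "B \<in> set Bs" for B
  proof -
    obtain p where p: "p \<in> set ps" "B = eval_mat k p As"
      using B by (auto simp: Bs_def)
    then have "\<bar>opnorm k B - norm (eval_alg p x)\<bar> \<le> \<epsilon>'"
      using Gamma_top_Nil_tested[OF As] tested by blast
    then show ?thesis using ps_bound p(1) by fastforce
  qed
  have consQ: "\<bar>opnorm k (eval_mat k (Q j) (As @ Bs)) - norm (eval_alg (Q j) (x @ y))\<bar> \<le> \<epsilon>" if j: "j < r" for j
  proof -
    let ?s = "subst_poly (length x) (Q j) ps"
    have "eval_mat k (Q j) (As @ Bs) = eval_mat k ?s As"
      unfolding Bs_def using lAs saAs ps_rat Q_rat ps_len
      by (intro eval_mat_subst_poly[symmetric]) (auto simp: sa_mats_def)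
    moreover have "eval_alg ?s x = eval_alg (Q j) (x @ map (\<lambda>p. eval_alg p x) ps)"
      using Q_rat ps_len by (intro eval_alg_subst_poly) auto
    moreover have "\<bar>opnorm k (eval_mat k ?s As) - norm (eval_alg ?s x)\<bar> \<le> \<epsilon>'"
      using Gamma_top_Nil_tested[OF As] tested j by blast
    ultimately show ?thesis using Q_close j by fastforce
  qed
  show "As \<in> Gamma_top x y Q R' k \<epsilon> r"
    unfolding Gamma_top_def mem_Collect_eq using RR' nAs nBs ps_len
    by (intro conjI exI[of _ Bs] lAs saAs saBs allI impI consQ) (auto simp: Bs_def)
qed

lemma sa_approx_seq:
  fixes x y :: "'a::cstar_algebra list"
  assumes sax: "\<forall>a\<in>set x. adj a = a" and say: "\<forall>b\<in>set y. adj b = b"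
    and gen: "set y \<subseteq> cstar_generated (set x)"
  obtains pp where "\<And>l k. l < length y \<Longrightarrow> pp l k \<in> rat_ncpolys (length x)"
    "\<And>l k. l < length y \<Longrightarrow> preserves_sa (length x) (pp l k)"
    "\<And>l k. l < length y \<Longrightarrow> norm (eval_alg (pp l k) x - y ! l) < inverse (real (Suc k))"
proof -
  define good where "good l k p \<longleftrightarrow> p \<in> rat_ncpolys (length x) \<and> preserves_sa (length x) p \<and>
      norm (eval_alg p x - y ! l) < inverse (real (Suc k))" for l k p
  have good_ex: "\<exists>p. good l k p" if l: "l < length y" for l k
  proof -
    have "y ! l \<in> closure (rat_poly_values x)" using l gen generated_in_closure[OF sax] by force
    moreover have "adj (y ! l) = y ! l" using l say by simp
    moreover have "inverse (real (Suc k)) > 0" by simp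
    ultimately obtain p where "p \<in> rat_ncpolys (length x)" "preserves_sa (length x) p"
      "norm (eval_alg p x - y ! l) < inverse (real (Suc k))"
      by (rule sa_approx[OF sax])
    then show ?thesis by (auto simp: good_def)
  qed
  define pp where "pp l k = (SOME p. good l k p)" for l k
  have good_pp: "good l k (pp l k)" if "l < length y" for l k
    unfolding pp_def by (rule someI_ex[OF good_ex[OF that]])
  show ?thesis by (rule that) (use good_pp in \<open>auto simp: good_def\<close>)
qed

text \<open>Polynomials in \<open>x\<close> approximating \<open>y\<close> so closely that the first \<open>r\<close> test polynomials
  change their norms by less than \<open>\<delta>\<close>: take a late member of the approximating sequence and use
  the continuity of evaluation.\<close>
lemma approximating_polys:
  fixes x y :: "'a::cstar_algebra list" and Q :: "nat \<Rightarrow> ncpoly" and r :: nat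
  assumes sax: "\<forall>a\<in>set x. adj a = a" and say: "\<forall>b\<in>set y. adj b = b"
    and gen: "set y \<subseteq> cstar_generated (set x)"
    and Q_vars: "\<And>j. vars_below (length x + length y) (Q j)" and \<delta>: "\<delta> > 0"
  obtains ps where "length ps = length y" "\<forall>p\<in>set ps. p \<in> rat_ncpolys (length x)"
    "\<forall>p\<in>set ps. preserves_sa (length x) p" "\<forall>l<length y. norm (eval_alg (ps ! l) x - y ! l) < 1"
    "\<forall>j<r. \<bar>norm (eval_alg (Q j) (x @ map (\<lambda>p. eval_alg p x) ps)) - norm (eval_alg (Q j) (x @ y))\<bar> < \<delta>"
proof -
  let ?n = "length x" and ?m = "length y"
  obtain pp where pp_rat: "\<And>l k. l < ?m \<Longrightarrow> pp l k \<in> rat_ncpolys ?n"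
    and pp_sa: "\<And>l k. l < ?m \<Longrightarrow> preserves_sa ?n (pp l k)"
    and pp_close: "\<And>l k. l < ?m \<Longrightarrow> norm (eval_alg (pp l k) x - y ! l) < inverse (real (Suc k))"
    using sa_approx_seq[OF sax say gen] by blast
  define ps where "ps k = map (\<lambda>l. pp l k) [0..<?m]" for k
  define zs where "zs k = x @ map (\<lambda>p. eval_alg p x) (ps k)" for k
  have conv: "((\<lambda>k. zs k ! i) \<longlongrightarrow> (x @ y) ! i) sequentially" if i: "i < ?n + ?m" for i
  proof (cases "i < ?n")
    case False
    let ?l = "i - ?n"
    have l: "?l < ?m" using i False by simp
    have "((\<lambda>k. eval_alg (pp ?l k) x - y ! ?l) \<longlongrightarrow> 0) sequentially"
      by (rule Lim_null_comparison[OF _ LIMSEQ_inverse_real_of_nat])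
         (use pp_close[OF l] in \<open>auto intro!: always_eventually less_imp_le\<close>)
    then have "((\<lambda>k. eval_alg (pp ?l k) x) \<longlongrightarrow> y ! ?l) sequentially" by (rule LIM_zero_cancel)
    then show ?thesis using i False by (simp add: zs_def ps_def nth_append)
  qed (simp add: zs_def nth_append)
  have "((\<lambda>k. norm (eval_alg (Q j) (zs k))) \<longlongrightarrow> norm (eval_alg (Q j) (x @ y))) sequentially" for j
    using Q_vars[of j] by (intro tendsto_norm tendsto_eval_alg) (auto simp: vars_below_def intro: conv)
  then have "\<forall>\<^sub>F k in sequentially. \<forall>j\<in>{..<r}. \<bar>norm (eval_alg (Q j) (zs k)) - norm (eval_alg (Q j) (x @ y))\<bar> < \<delta>"
    using \<delta> by (intro eventually_ball_finite) (auto simp: tendsto_iff dist_real_def)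
  then obtain k0 where k0: "\<forall>j<r. \<bar>norm (eval_alg (Q j) (zs k0)) - norm (eval_alg (Q j) (x @ y))\<bar> < \<delta>"
    by (auto simp: eventually_sequentially)
  have "norm (eval_alg (ps k0 ! l) x - y ! l) < 1" if l: "l < ?m" for l
    using pp_close[OF l, of k0] l
    by (simp add: ps_def) (smt (verit) inverse_le_1_iff of_nat_0_le_iff of_nat_Suc)
  then show ?thesis
    using that[of "ps k0"] k0 pp_rat pp_sa by (auto simp: ps_def zs_def)
qed

lemma Gamma_top_extend:
  fixes x y :: "'a::cstar_algebra list"
  assumes sax: "\<forall>a\<in>set x. adj a = a" and say: "\<forall>b\<in>set y. adj b = b"
    and gen: "set y \<subseteq> cstar_generated (set x)"
    and P_onto: "rat_ncpolys (length x) \<subseteq> range P"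
    and Q_rat: "\<And>j. Q j \<in> rat_ncpolys (length x + length y)"
    and RR': "R \<le> R'" and y_bound: "\<And>b. b \<in> set y \<Longrightarrow> norm b + 2 \<le> R'"
    and "\<epsilon> > 0"
  shows "\<exists>\<epsilon>'>0. \<exists>r'\<ge>1. \<forall>k. Gamma_top x [] P R k \<epsilon>' r' \<subseteq> Gamma_top x y Q R' k \<epsilon> r"
proof -
  define \<epsilon>' where "\<epsilon>' = min (\<epsilon> / 2) 1"
  have Q_vars: "vars_below (length x + length y) (Q j)" for j
    using Q_rat by (simp add: rat_ncpolys_iff)
  obtain ps where ps_len: "length ps = length y" and ps_rat: "\<forall>p\<in>set ps. p \<in> rat_ncpolys (length x)"
    and ps_sa: "\<forall>p\<in>set ps. preserves_sa (length x) p"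
    and ps_close: "\<forall>l<length y. norm (eval_alg (ps ! l) x - y ! l) < 1"
    and Q_close: "\<forall>j<r. \<bar>norm (eval_alg (Q j) (x @ map (\<lambda>p. eval_alg p x) ps)) - norm (eval_alg (Q j) (x @ y))\<bar> < \<epsilon> / 2"
    by (rule approximating_polys[OF sax say gen Q_vars half_gt_zero[OF \<open>\<epsilon> > 0\<close>], where r = r])
  have "norm (eval_alg p x) + \<epsilon>' \<le> R'" if "p \<in> set ps" for p
  proof -
    obtain l where l: "l < length y" "p = ps ! l" using \<open>p \<in> set ps\<close> ps_len by (metis in_set_conv_nth)
    have "norm (eval_alg p x - y ! l) < 1" using ps_close l by simp
    then have "norm (eval_alg p x) \<le> norm (y ! l) + 1"
      using norm_triangle_ineq2[of "eval_alg p x" "y ! l"] by linarith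
    then show ?thesis using y_bound[of "y ! l"] l(1) by (simp add: \<epsilon>'_def)
  qed
  moreover have "\<bar>norm (eval_alg (Q j) (x @ map (\<lambda>p. eval_alg p x) ps)) - norm (eval_alg (Q j) (x @ y))\<bar> \<le> \<epsilon> - \<epsilon>'"
    if "j < r" for j
  proof -
    have "\<epsilon>' \<le> \<epsilon> / 2" by (simp add: \<epsilon>'_def)
    then show ?thesis using Q_close that by fastforce
  qed
  moreover obtain r' where "r' \<ge> 1"
    and tested: "set ps \<union> (\<lambda>j. subst_poly (length x) (Q j) ps) ` {..<r} \<subseteq> P ` {..<r'}"
  proof (rule finite_in_range_prefix)
    have "subst_poly (length x) (Q j) ps \<in> rat_ncpolys (length x)" for j
      using ps_rat Q_rat ps_len by (intro rat_subst_poly) auto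
    then show "set ps \<union> (\<lambda>j. subst_poly (length x) (Q j) ps) ` {..<r} \<subseteq> range P"
      using P_onto ps_rat by blast
  qed simp
  ultimately have "Gamma_top x [] P R k \<epsilon>' r' \<subseteq> Gamma_top x y Q R' k \<epsilon> r" for k
    using RR' by (intro subsetI microstate_extend[OF _ Q_rat ps_len ps_rat ps_sa]) auto
  moreover have "\<epsilon>' > 0" using \<open>\<epsilon> > 0\<close> by (simp add: \<epsilon>'_def)
  ultimately show ?thesis using \<open>r' \<ge> 1\<close> by blast
qed

lemma microstates_dominated_extend:
  fixes x y :: "'a::cstar_algebra list"
  assumes "\<forall>a\<in>set x. adj a = a" and "\<forall>b\<in>set y. adj b = b"
    and "set y \<subseteq> cstar_generated (set x)"
    and "rat_ncpolys (length x) \<subseteq> range P"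
    and "\<And>j. Q j \<in> rat_ncpolys (length x + length y)"
  shows "microstates_dominated x [] P x y Q"
proof -
  define M where "M = Max (insert 0 (norm ` set y))"
  have M_nonneg: "0 \<le> M" unfolding M_def by (auto intro: Max_ge)
  have y_bound: "norm b + 2 \<le> max R (M + 2)" if "b \<in> set y" for b R
  proof -
    have "norm b \<le> M" unfolding M_def using that by (auto intro: Max_ge)
    then show ?thesis by linarith
  qed
  show ?thesis
  proof (rule microstates_dominatedI[where \<rho> = "\<lambda>R. max R (M + 2)"])
    show "max R (M + 2) > 0" for R using M_nonneg by linarith
    show "\<exists>\<epsilon>'>0. \<exists>r'\<ge>1. \<forall>k. Gamma_top x [] P R k \<epsilon>' r' \<subseteq> Gamma_top x y Q (max R (M + 2)) k \<epsilon> r"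
      if "\<epsilon> > 0" for R \<epsilon> r
      by (rule Gamma_top_extend[OF assms _ y_bound that]) simp
  qed
qed

theorem lemma3p2:
  fixes x y :: "'a::cstar_algebra list"
    and P Q :: "nat \<Rightarrow> ncpoly"
    and \<omega> :: real
  assumes "\<forall>a\<in>set x. adj a = a"
    and "\<forall>b\<in>set y. adj b = b"
    and "set y \<subseteq> cstar_generated (set x)"
    and "bij_betw P UNIV (rat_ncpolys (length x))"
    and "bij_betw Q UNIV (rat_ncpolys (length x + length y))"
    and "\<omega> > 0"
  shows "Ktop x [] P (4 * \<omega>) \<le> Ktop x y Q (2 * \<omega>) \<and> Ktop x y Q (2 * \<omega>) \<le> Ktop x [] P \<omega>"
proof
  have P_range: "range P = rat_ncpolys (length x)" and Q_range: "range Q = rat_ncpolys (length x + length y)"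
    using assms(4,5) by (simp_all add: bij_betw_def)
  then have "microstates_dominated x [] P x y Q"
    by (intro microstates_dominated_extend[OF assms(1-3)]) auto
  then have "Ktop x [] P (2 * (2 * \<omega>)) \<le> Ktop x y Q (2 * \<omega>)"
    by (rule Ktop_le_if_dominated)
  then show "Ktop x [] P (4 * \<omega>) \<le> Ktop x y Q (2 * \<omega>)" by simp
  have P_rat: "P j \<in> rat_ncpolys (length x)" for j using P_range by blast
  then have "P j \<in> range Q" for j
    using rat_ncpolys_mono[of "length x" "length x + length y"] Q_range by auto
  moreover have "vars_below (length x) (P j)" for j using P_rat by (simp add: rat_ncpolys_iff)
  ultimately show "Ktop x y Q (2 * \<omega>) \<le> Ktop x [] P \<omega>"
    by (intro Ktop_le_if_dominated microstates_dominated_forget)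
qed

end
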